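(* Assume conditions (C1)–(C5). Then for every $\zeta=\{\zeta_k\}_{k\in\mathbb Z}\in\Theta$ the impulsive system $(I_\zeta)$ has a unique solution $\phi_\zeta(s)=\{\phi^{ij}_\zeta(s)\}$ defined on all of $\mathbb R$ and satisfying $\sup_{s\in\mathbb R}\|\phi_\zeta(s)\|\le H_0$.
   Context: Fix integers $m,n\ge1$ and $r\ge0$. Cells are indexed by pairs $(i,j)$, $1\le i\le m$, $1\le j\le n$. The $r$-neighbourhood of $(i,j)$ is $N_r(i,j)=\{(h,l):1\le h\le m,\ 1\le l\le n,\ \max(|h-i|,|l-j|)\le r\}$. Fix constants $a_{ij}>0$, $C^{hl}_{ij}\ge0$, and a continuous function $f:\mathbb R\to\mathbb R$. Vectors of $\mathbb R^{mn}$ are written $v=\{v_{ij}\}$, with norm $\|v\|=\max_{(i,j)}|v_{ij}|$. Time scale: $\{\theta_k\}_{k\in\mathbb Z}$ is strictly increasing, $\theta_{-1}<0<\theta_0$, and there exist $\omega>0$ and $p\in\mathbb N$ with $\theta_{k+2p}=\theta_k+\omega$ for all $k$. Set $\mathbb T_0=\bigcup_{k\in\mathbb Z}[\theta_{2k-1},\theta_{2k}]$, $\delta_k=\theta_{2k+1}-\theta_{2k}$, $\eta_k=\theta_{2k}-\theta_{2k-1}$ (both $p$-periodic in $k$), $\delta=\max_{1\le k\le p}\delta_k$. On $\mathbb T_0'=\mathbb T_0\setminus\{\theta_{2k-1}:k\in\mathbb Z\}$ define $\psi(t)=t-\sum_{0<\theta_{2k}<t}\delta_k$ for $t\ge0$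 and $\psi(t)=t+\sum_{t\le\theta_{2k}<0}\delta_k$ for $t<0$; put $s_k=\psi(\theta_{2k})$, so $s_k-s_{k-1}=\eta_k$, and write $\psi(\omega):=\omega-\sum_{k=1}^p\delta_k=\sum_{k=1}^p\eta_k$, so $s_{k+p}=s_k+\psi(\omega)$. Inputs: $\Lambda\subset\mathbb R^{mn}$ is compact and $F:\Lambda\to\Lambda$ is continuous. $\Theta$ is the set of all sequences $\zeta=\{\zeta_k\}_{k\in\mathbb Z}$, $\zeta_k=\{\zeta^{ij}_k\}\in\Lambda$, with $\zeta_{k+1}=F(\zeta_k)$ for all $k\in\mathbb Z$. Impulsive system $(I_\zeta)$: for $s\in(s_{k-1},s_k)$, $y_{ij}'(s)=-a_{ij}y_{ij}(s)-\sum_{(h,l)\in N_r(i,j)}C^{hl}_{ij}f(y_{hl}(s))y_{ij}(s)+\zeta^{ij}_k$, and at $s=s_k$, $y_{ij}(s_k+)-y_{ij}(s_k)=-\delta_ka_{ij}y_{ij}(s_k)-\delta_k\sum_{(h,l)\in N_r(i,j)}C^{hl}_{ij}f(y_{hl}(s_k))y_{ij}(s_k)+\delta_k\zeta^{ij}_k$, where $y(s_k+)=\lim_{s\to s_k^+}y(s)$. Solutions are left-continuous, continuous except for discontinuities of the first kind at the points $s_k$. Let $u_{ij}(s,\tau)=e^{-a_{ij}(s-\tau)}\prod_{\nu=l}^{k}(1-\delta_\nu a_{ij})$ if $s_{l-1}<\tau\le s_l$, $s_k<s\le s_{k+1}$, $k\ge l$, and $u_{ij}(s,\tau)=e^{-a_{ij}(s-\tau)}$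 if $s_k<\tau\le s\le s_{k+1}$. Let $\lambda_{ij}=a_{ij}-\frac1{\psi(\omega)}\sum_{\nu=0}^{p-1}\ln|1-\delta_\nu a_{ij}|$, $\lambda=\min_{(i,j)}\lambda_{ij}$. Conditions: (C1) $\delta_ka_{ij}\ne1$ for all $i,j,k$; (C2) $\lambda>0$; (C3) $\sup_{s\in\mathbb R}|f(s)|\le M_f$ for some $M_f>0$; (C4) $|f(s_1)-f(s_2)|\le L_f|s_1-s_2|$ for all $s_1,s_2$, for some $L_f>0$. Under (C1),(C2) fix positive numbers $K_{ij}$ with $|u_{ij}(s,\tau)|\le K_{ij}e^{-\lambda_{ij}(s-\tau)}$ for $s\ge\tau$, and put $K=\max K_{ij}$. Define $\bar c=\max_{(i,j)}\big(\frac{K_{ij}}{\lambda_{ij}}+\frac{p\delta K_{ij}}{1-e^{-\lambda_{ij}\psi(\omega)}}\big)\sum_{(h,l)\in N_r(i,j)}C^{hl}_{ij}$, $M_F=\max_{\eta\in\Lambda}\|F(\eta)\|$, and (when $M_f\bar c<1$) $H_0=\frac{M_F}{1-M_f\bar c}\max_{(i,j)}\big(\frac{K_{ij}}{\lambda_{ij}}+\frac{p\delta K_{ij}}{1-e^{-\lambda_{ij}\psi(\omega)}}\big)$, $\bar d=(M_f+H_0L_f)\max_{(i,j)}K_{ij}\sum_{(h,l)\in N_r(i,j)}C^{hl}_{ij}$. (C5) $(M_f+H_0L_f)\bar c<1$ (this includes $M_f\bar c<1$). *)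

theory Defs
  imports "HOL-Analysis.Analysis"
begin

type_synonym cell = "nat \<times> nat"
type_synonym vec = "cell \<Rightarrow> real"

definition cells :: "nat \<Rightarrow> nat \<Rightarrow> cell set" where
  "cells m n = {1..m} \<times> {1..n}"

definition nbhd :: "nat \<Rightarrow> nat \<Rightarrow> nat \<Rightarrow> cell \<Rightarrow> cell set" where
  "nbhd m n r c = {d \<in> cells m n.
      max \<bar>int (fst d) - int (fst c)\<bar> \<bar>int (snd d) - int (snd c)\<bar> \<le> int r}"

definition vnorm :: "nat \<Rightarrow> nat \<Rightarrow> vec \<Rightarrow> real" where
  "vnorm m n v = Max ((\<lambda>c. \<bar>v c\<bar>) ` cells m n)"

definition del :: "(int \<Rightarrow> real) \<Rightarrow> int \<Rightarrow> real" where
  "del \<theta> k = \<theta> (2*k+1) - \<theta> (2*k)"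

definition eta :: "(int \<Rightarrow> real) \<Rightarrow> int \<Rightarrow> real" where
  "eta \<theta> k = \<theta> (2*k) - \<theta> (2*k-1)"

definition psi :: "(int \<Rightarrow> real) \<Rightarrow> real \<Rightarrow> real" where
  "psi \<theta> t = (if 0 \<le> t then t - (\<Sum>k\<in>{k. 0 < \<theta> (2*k) \<and> \<theta> (2*k) < t}. del \<theta> k)
              else t + (\<Sum>k\<in>{k. t \<le> \<theta> (2*k) \<and> \<theta> (2*k) < 0}. del \<theta> k))"

definition sk :: "(int \<Rightarrow> real) \<Rightarrow> int \<Rightarrow> real" where
  "sk \<theta> k = psi \<theta> (\<theta> (2*k))"

definition psi_om :: "(int \<Rightarrow> real) \<Rightarrow> nat \<Rightarrow> real" where
  "psi_om \<theta> p = (\<Sum>k\<in>{1..int p}. eta \<theta> k)"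

definition delta_max :: "(int \<Rightarrow> real) \<Rightarrow> nat \<Rightarrow> real" where
  "delta_max \<theta> p = Max (del \<theta> ` {1..int p})"

definition sidx :: "(int \<Rightarrow> real) \<Rightarrow> real \<Rightarrow> int" where
  "sidx \<theta> t = (THE k. sk \<theta> (k-1) < t \<and> t \<le> sk \<theta> k)"

text \<open>u_{ij}(s,tau) (for s >= tau): if s_{l-1} < tau <= s_l and s_k < s <= s_{k+1},
  then exp(-a(s-tau)) * prod_{nu=l}^{k} (1 - delta_nu a); empty product if k < l.\<close>
definition u :: "(int \<Rightarrow> real) \<Rightarrow> real \<Rightarrow> real \<Rightarrow> real \<Rightarrow> real" where
  "u \<theta> aij s \<tau> = exp (- aij * (s - \<tau>)) *
      (\<Prod>\<nu>\<in>{sidx \<theta> \<tau> .. sidx \<theta> s - 1}. 1 - del \<theta> \<nu> * aij)"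

definition lam :: "(int \<Rightarrow> real) \<Rightarrow> nat \<Rightarrow> real \<Rightarrow> real" where
  "lam \<theta> p aij = aij - (1 / psi_om \<theta> p) * (\<Sum>\<nu>\<in>{0..<int p}. ln \<bar>1 - del \<theta> \<nu> * aij\<bar>)"

definition coef :: "(int \<Rightarrow> real) \<Rightarrow> nat \<Rightarrow> (cell \<Rightarrow> real) \<Rightarrow> (cell \<Rightarrow> real) \<Rightarrow> cell \<Rightarrow> real" where
  "coef \<theta> p a K c = K c / lam \<theta> p (a c)
      + real p * delta_max \<theta> p * K c / (1 - exp (- lam \<theta> p (a c) * psi_om \<theta> p))"

definition cbar :: "nat \<Rightarrow> nat \<Rightarrow> nat \<Rightarrow> (int \<Rightarrow> real) \<Rightarrow> nat \<Rightarrow> (cell \<Rightarrow> real)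
    \<Rightarrow> (cell \<Rightarrow> cell \<Rightarrow> real) \<Rightarrow> (cell \<Rightarrow> real) \<Rightarrow> real" where
  "cbar m n r \<theta> p a C K =
     Max ((\<lambda>c. coef \<theta> p a K c * (\<Sum>d\<in>nbhd m n r c. C c d)) ` cells m n)"

definition MF :: "nat \<Rightarrow> nat \<Rightarrow> vec set \<Rightarrow> (vec \<Rightarrow> vec) \<Rightarrow> real" where
  "MF m n \<Lambda> F = Sup ((\<lambda>\<eta>. vnorm m n (F \<eta>)) ` \<Lambda>)"

definition H0 :: "nat \<Rightarrow> nat \<Rightarrow> nat \<Rightarrow> (int \<Rightarrow> real) \<Rightarrow> nat \<Rightarrow> (cell \<Rightarrow> real)
    \<Rightarrow> (cell \<Rightarrow> cell \<Rightarrow> real) \<Rightarrow> (cell \<Rightarrow> real) \<Rightarrow> real \<Rightarrow> vec set \<Rightarrow> (vec \<Rightarrow> vec) \<Rightarrow> real" where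
  "H0 m n r \<theta> p a C K Mf \<Lambda> F =
     MF m n \<Lambda> F / (1 - Mf * cbar m n r \<theta> p a C K) * Max (coef \<theta> p a K ` cells m n)"

definition Theta :: "vec set \<Rightarrow> (vec \<Rightarrow> vec) \<Rightarrow> (int \<Rightarrow> vec) set" where
  "Theta \<Lambda> F = {\<zeta>. (\<forall>k. \<zeta> k \<in> \<Lambda>) \<and> (\<forall>k. \<zeta> (k+1) = F (\<zeta> k))}"

definition rhs :: "nat \<Rightarrow> nat \<Rightarrow> nat \<Rightarrow> (cell \<Rightarrow> real) \<Rightarrow> (cell \<Rightarrow> cell \<Rightarrow> real)
    \<Rightarrow> (real \<Rightarrow> real) \<Rightarrow> vec \<Rightarrow> vec \<Rightarrow> cell \<Rightarrow> real" where
  "rhs m n r a C f y z c =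
     - a c * y c - (\<Sum>d\<in>nbhd m n r c. C c d * f (y d) * y c) + z c"

definition is_sol :: "nat \<Rightarrow> nat \<Rightarrow> nat \<Rightarrow> (int \<Rightarrow> real) \<Rightarrow> (cell \<Rightarrow> real)
    \<Rightarrow> (cell \<Rightarrow> cell \<Rightarrow> real) \<Rightarrow> (real \<Rightarrow> real) \<Rightarrow> (int \<Rightarrow> vec) \<Rightarrow> (real \<Rightarrow> vec) \<Rightarrow> bool" where
  "is_sol m n r \<theta> a C f \<zeta> y \<longleftrightarrow>
     (\<forall>k. \<forall>t\<in>{sk \<theta> (k-1)<..<sk \<theta> k}. \<forall>c\<in>cells m n.
         ((\<lambda>t. y t c) has_real_derivative rhs m n r a C f (y t) (\<zeta> k) c) (at t)) \<and>
     (\<forall>k. \<forall>c\<in>cells m n.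
         ((\<lambda>t. y t c) \<longlongrightarrow> y (sk \<theta> k) c) (at_left (sk \<theta> k)) \<and>
         ((\<lambda>t. y t c) \<longlongrightarrow> y (sk \<theta> k) c + del \<theta> k * rhs m n r a C f (y (sk \<theta> k)) (\<zeta> k) c)
            (at_right (sk \<theta> k)))"

end

theory Submission
  imports Defs
begin

text \<open>For a fixed forcing \<open>h\<close> the scalar impulsive equation \<open>y' = -a y + h\<close>,
  \<open>y(s\<^sub>k+) = y(s\<^sub>k) + \<delta>\<^sub>k (-a y(s\<^sub>k) + h(s\<^sub>k))\<close> has a bounded solution, given at the points
  \<open>s\<^sub>k\<close> by the Green series \<open>\<Sum>\<^sub>i u(s\<^sub>k, s\<^sub>k\<^sub>-\<^sub>i) c\<^sub>k\<^sub>-\<^sub>i\<close> (\<open>c\<^sub>j\<close> being the contribution of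
  the \<open>j\<close>-th interval), and every bounded solution of its integrated
  form is bounded by \<open>coef \<cdot> sup |h|\<close>: integrating backwards over \<open>p m\<close> intervals and using
  \<open>|u(s,\<tau>)| \<le> K exp (-\<lambda> (s - \<tau>))\<close> together with \<open>s\<^sub>k - s\<^sub>k\<^sub>-\<^sub>p\<^sub>m = m \<psi>(\<omega>)\<close> produces geometric series.
  Freezing the coupling term along a function \<open>\<phi>\<close> splits \<open>(I\<^sub>\<zeta>)\<close> into such scalar equations, one per
  cell; the resulting operator maps the functions bounded by \<open>H\<^sub>0\<close> into themselves and contracts
  with factor \<open>(M\<^sub>f + H\<^sub>0 L\<^sub>f) cbar < 1\<close>, so Picard iteration converges to the unique solution
  bounded by \<open>H\<^sub>0\<close>.\<close>

section \<open>Estimates for sums, series and integrals\<close>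

lemma abs_mult_le_mult:
  fixes x y :: "'a::linordered_idom"
  assumes "\<bar>x\<bar> \<le> X" "\<bar>y\<bar> \<le> Y"
  shows "\<bar>x * y\<bar> \<le> X * Y"
  unfolding abs_mult using assms by (intro mult_mono) (auto intro: order_trans[OF abs_ge_zero])

lemma sum_power_div_le:
  fixes r :: real
  assumes r: "0 \<le> r" "r < 1" and p: "p \<ge> 1"
  shows "(\<Sum>i\<le>n. r ^ (i div p)) \<le> real p / (1 - r)"
proof -
  have block: "(\<Sum>i\<in>{m*p..<m*p+p}. r ^ (i div p)) = real p * r ^ m" for m
  proof -
    have "i div p = m" if "i \<in> {m*p..<m*p+p}" for i
    proof -
      have "m*p div p \<le> i div p" using that by (intro div_le_mono) auto
      moreover have "i div p < Suc m" using that by (intro less_mult_imp_div_less) auto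
      ultimately show ?thesis using p by simp
    qed
    then show ?thesis by simp
  qed
  have "Suc n * 1 \<le> Suc n * p" using p by (rule mult_le_mono2)
  then have "{..n} \<subseteq> {..<Suc n * p}" by auto
  then have "(\<Sum>i\<le>n. r ^ (i div p)) \<le> (\<Sum>i<Suc n * p. r ^ (i div p))"
    using r by (intro sum_mono2) auto
  also have "\<dots> = (\<Sum>m<Suc n. \<Sum>i\<in>{m*p..<m*p+p}. r ^ (i div p))"
    by (rule sum.nat_group[symmetric])
  also have "\<dots> = real p * ((1 - r ^ Suc n) / (1 - r))"
    using r by (simp add: block sum_distrib_left[symmetric] sum_gp_strict del: sum.lessThan_Suc)
  also have "\<dots> \<le> real p * (1 / (1 - r))"
    using r by (intro mult_left_mono divide_right_mono) auto
  finally show ?thesis by simp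
qed

lemma suminf_abs_le:
  fixes f g :: "nat \<Rightarrow> real"
  assumes "summable g" "\<And>n. \<bar>f n\<bar> \<le> g n"
  shows "summable f" "\<bar>suminf f\<bar> \<le> suminf g"
proof -
  show sf: "summable f" by (rule summable_comparison_test'[OF assms(1)]) (use assms(2) in auto)
  have "suminf f \<le> suminf g" using assms sf by (intro suminf_le) (auto simp: abs_le_iff)
  moreover have "suminf (\<lambda>n. - f n) \<le> suminf g" using assms sf
    by (intro suminf_le summable_minus) (auto simp: abs_le_iff)
  ultimately show "\<bar>suminf f\<bar> \<le> suminf g" by (simp add: suminf_minus[OF sf])
qed

lemma summable_power_div:
  fixes r :: real
  assumes "0 \<le> r" "r < 1" "p \<ge> 1"
  shows "summable (\<lambda>i. r ^ (i div p))" and "(\<Sum>i. r ^ (i div p)) \<le> real p / (1 - r)"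
proof -
  have partial: "(\<Sum>i<n. r ^ (i div p)) \<le> real p / (1 - r)" for n
  proof -
    have "(\<Sum>i<n. r ^ (i div p)) \<le> (\<Sum>i\<le>n. r ^ (i div p))"
      using assms by (intro sum_mono2) auto
    then show ?thesis using sum_power_div_le[OF assms, of n] by linarith
  qed
  show "summable (\<lambda>i. r ^ (i div p))"
    by (rule bounded_imp_summable[where B="real p / (1 - r)"]) (use sum_power_div_le assms in auto)
  then show "(\<Sum>i. r ^ (i div p)) \<le> real p / (1 - r)"
    by (rule suminf_le_const) (rule partial)
qed

lemma le_by_geometric_bound:
  fixes x y c q :: real
  assumes "0 \<le> q" "q < 1" "\<And>n. x \<le> y + c * q ^ n"
  shows "x \<le> y"
proof -
  have "(\<lambda>n. y + c * q ^ n) \<longlonglongrightarrow> y + c * 0"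
    using assms(1,2) by (intro tendsto_intros) auto
  then show ?thesis
    using tendsto_le[OF trivial_limit_sequentially _ tendsto_const, of "\<lambda>n. y + c * q ^ n" "y + c * 0" x]
      assms(3) by auto
qed

text \<open>A total choice of limit for sequences with summable increments.\<close>
definition series_lim :: "(nat \<Rightarrow> real) \<Rightarrow> real" where
  "series_lim g = g 0 + (\<Sum>i. g (Suc i) - g i)"

lemma series_lim_dist:
  fixes g :: "nat \<Rightarrow> real"
  assumes steps: "\<And>n. \<bar>g (Suc n) - g n\<bar> \<le> M * q ^ n" and q: "0 \<le> q" "q < 1"
  shows "\<bar>g n - series_lim g\<bar> \<le> M * q ^ n / (1 - q)"
proof -
  define d where "d i = g (Suc i) - g i" for i
  have "summable (\<lambda>i. M * q ^ i)" using q by (intro summable_mult summable_geometric) auto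
  then have "summable d" unfolding d_def by (rule suminf_abs_le(1)) (rule steps)
  then have "suminf d = (\<Sum>i. d (i + n)) + (\<Sum>i<n. d i)" by (rule suminf_split_initial_segment)
  moreover have "(\<Sum>i<n. d i) = g n - g 0" unfolding d_def by (rule sum_lessThan_telescope)
  ultimately have "series_lim g - g n = (\<Sum>i. d (i + n))" unfolding series_lim_def d_def by simp
  also have "\<bar>\<dots>\<bar> \<le> (\<Sum>i. M * q ^ n * q ^ i)"
  proof (rule suminf_abs_le(2))
    show "summable (\<lambda>i. M * q ^ n * q ^ i)" using q by (intro summable_mult summable_geometric) auto
    show "\<bar>d (i + n)\<bar> \<le> M * q ^ n * q ^ i" for i
      using steps[of "i + n"] unfolding d_def by (simp add: power_add algebra_simps)
  qed
  also have "\<dots> = M * q ^ n / (1 - q)" using q by (simp add: suminf_mult suminf_geometric)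
  finally show ?thesis by (simp add: abs_minus_commute)
qed

lemma uniform_limit_series_lim:
  assumes steps: "\<And>N t. t \<in> I \<Longrightarrow> \<bar>g (Suc N) t - g N t\<bar> \<le> M * q ^ N" and q: "0 \<le> q" "q < 1"
  shows "uniform_limit I g (\<lambda>t. series_lim (\<lambda>N. g N t)) sequentially"
  unfolding uniform_limit_iff
proof (intro allI impI)
  fix e :: real assume "e > 0"
  have "(\<lambda>N. M * q ^ N / (1 - q)) \<longlonglongrightarrow> M * 0 / (1 - q)"
    using q by (intro tendsto_intros) auto
  then have "eventually (\<lambda>N. M * q ^ N / (1 - q) < e) sequentially"
    using \<open>e > 0\<close> by (intro order_tendstoD(2)) auto
  moreover have "\<bar>g N t - series_lim (\<lambda>N. g N t)\<bar> \<le> M * q ^ N / (1 - q)" if "t \<in> I" for N t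
    by (rule series_lim_dist) (use steps that q in auto)
  ultimately show "eventually (\<lambda>N. \<forall>t\<in>I. dist (g N t) (series_lim (\<lambda>N. g N t)) < e) sequentially"
    unfolding dist_real_def by (auto elim!: eventually_mono intro: le_less_trans)
qed

lemma bounded_lipschitz_mult_diff:
  fixes f :: "real \<Rightarrow> real"
  assumes "\<forall>x. \<bar>f x\<bar> \<le> M" "\<forall>x y. \<bar>f x - f y\<bar> \<le> Lf * \<bar>x - y\<bar>" "Lf \<ge> 0"
    and "\<bar>x\<bar> \<le> H" "\<bar>y\<^sub>1 - x\<^sub>1\<bar> \<le> W" "\<bar>y - x\<bar> \<le> W"
  shows "\<bar>f y\<^sub>1 * y - f x\<^sub>1 * x\<bar> \<le> (M + H * Lf) * W"
proof -
  have "\<bar>f y\<^sub>1 * (y - x)\<bar> \<le> M * W"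
    using assms(1,6) by (intro abs_mult_le_mult) auto
  moreover have "\<bar>f y\<^sub>1 - f x\<^sub>1\<bar> \<le> Lf * W"
    using assms(2,3,5) by (meson mult_left_mono order.trans)
  then have "\<bar>(f y\<^sub>1 - f x\<^sub>1) * x\<bar> \<le> Lf * W * H"
    using assms(4) by (intro abs_mult_le_mult)
  moreover have "f y\<^sub>1 * y - f x\<^sub>1 * x = f y\<^sub>1 * (y - x) + (f y\<^sub>1 - f x\<^sub>1) * x"
    by (simp add: algebra_simps)
  ultimately show ?thesis
    using abs_triangle_ineq[of "f y\<^sub>1 * (y - x)" "(f y\<^sub>1 - f x\<^sub>1) * x"] by (simp add: algebra_simps)
qed

lemma le_at_left_endpoint_by_continuity:
  fixes f g :: "real \<Rightarrow> real"
  assumes "\<alpha> < \<beta>" "continuous_on {\<alpha>..\<beta>} f" "continuous_on {\<alpha>..\<beta>} g"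
    and le: "\<And>t. \<alpha> < t \<Longrightarrow> t \<le> \<beta> \<Longrightarrow> f t \<le> g t"
  shows "f \<alpha> \<le> g \<alpha>"
proof -
  have "(f \<longlongrightarrow> f \<alpha>) (at \<alpha> within {\<alpha>..\<beta>})" "(g \<longlongrightarrow> g \<alpha>) (at \<alpha> within {\<alpha>..\<beta>})"
    using assms(1-3) by (auto simp: continuous_on_def)
  then have "(f \<longlongrightarrow> f \<alpha>) (at_right \<alpha>)" "(g \<longlongrightarrow> g \<alpha>) (at_right \<alpha>)"
    using assms(1) by (auto simp: at_within_Icc_at_right)
  moreover have "eventually (\<lambda>t. f t \<le> g t) (at_right \<alpha>)"
    unfolding eventually_at_right_field using assms(1) le by (intro exI[of _ \<beta>]) auto
  ultimately show ?thesis by (intro tendsto_le[OF trivial_limit_at_right_real])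
qed

lemma has_integral_abs_le:
  fixes f g :: "real \<Rightarrow> real"
  assumes "(f has_integral I) A" "(g has_integral J) A" "\<And>x. x \<in> A \<Longrightarrow> \<bar>f x\<bar> \<le> g x"
  shows "\<bar>I\<bar> \<le> J"
  using has_integral_le[OF assms(1,2)] has_integral_le[OF has_integral_neg[OF assms(1)] assms(2)] assms(3)
  by (smt (verit))

lemma has_integral_exp_decay:
  fixes c :: real
  assumes "c > 0" "\<alpha> \<le> \<beta>"
  shows "((\<lambda>\<tau>. exp (-c*(s-\<tau>))) has_integral ((exp (-c*(s-\<beta>)) - exp (-c*(s-\<alpha>)))/c)) {\<alpha>..\<beta>}"
proof -
  have "((\<lambda>\<tau>. exp (-c*(s-\<tau>))/c) has_real_derivative (exp (-c*(s-x)) * c)/c) (at x within {\<alpha>..\<beta>})" for x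
    by (auto intro!: derivative_eq_intros)
  then have "((\<lambda>\<tau>. exp (-c*(s-\<tau>))/c) has_vector_derivative exp (-c*(s-x))) (at x within {\<alpha>..\<beta>})" for x
    using assms(1) by (simp add: has_real_derivative_iff_has_vector_derivative)
  from fundamental_theorem_of_calculus[OF assms(2) this] show ?thesis
    by (simp add: diff_divide_distrib)
qed

lemma integral_exp_growth_bound:
  fixes c \<alpha> t B :: real and h :: "real \<Rightarrow> real"
  assumes "c > 0" "\<alpha> \<le> t" "(\<lambda>\<tau>. exp (c * \<tau>) * h \<tau>) integrable_on {\<alpha>..t}" "\<And>t. \<bar>h t\<bar> \<le> B"
  shows "\<bar>integral {\<alpha>..t} (\<lambda>\<tau>. exp (c * \<tau>) * h \<tau>)\<bar> \<le> B * ((exp (c * t) - exp (c * \<alpha>)) / c)"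
proof -
  have "\<bar>integral {\<alpha>..t} (\<lambda>\<tau>. exp (c * \<tau>) * h \<tau>)\<bar> \<le> B * ((exp (-c*(0-t)) - exp (-c*(0-\<alpha>)))/c)"
  proof (rule has_integral_abs_le[OF integrable_integral[OF assms(3)]
        has_integral_mult_right[OF has_integral_exp_decay[OF assms(1,2)]]])
    fix x
    have "exp (c * x) * \<bar>h x\<bar> \<le> exp (c * x) * B" using assms(4)[of x] by (intro mult_left_mono) auto
    then show "\<bar>exp (c * x) * h x\<bar> \<le> B * exp (-c*(0-x))" by (simp add: abs_mult algebra_simps)
  qed
  then show ?thesis by simp
qed

lemma exp_mult_exp_decay:
  fixes a s t g :: real
  shows "exp (- a * s) * (exp (a * t) * g) = exp (- a * (s - t)) * g"
proof -
  have "exp (- a * s) * exp (a * t) = exp (- a * (s - t))" by (simp add: exp_add[symmetric] algebra_simps)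
  then show ?thesis by (simp add: mult.assoc[symmetric])
qed

lemma continuous_on_Icc_patch_left:
  fixes y :: "real \<Rightarrow> real"
  assumes "\<alpha> < \<beta>" and inner: "\<And>t. \<alpha> < t \<Longrightarrow> t < \<beta> \<Longrightarrow> isCont y t"
    and left: "(y \<longlongrightarrow> y \<beta>) (at_left \<beta>)" and right: "(y \<longlongrightarrow> y\<^sub>0) (at_right \<alpha>)"
  shows "continuous_on {\<alpha>..\<beta>} (\<lambda>t. if t = \<alpha> then y\<^sub>0 else y t)" (is "continuous_on _ ?y")
  unfolding continuous_on_def
proof
  fix x assume x: "x \<in> {\<alpha>..\<beta>}"
  consider "x = \<alpha>" | "x = \<beta>" | "\<alpha> < x" "x < \<beta>" using x by fastforce
  then show "(?y \<longlongrightarrow> ?y x) (at x within {\<alpha>..\<beta>})"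
  proof cases
    case 1
    have ne: "eventually (\<lambda>t. t \<noteq> \<alpha>) (at_right \<alpha>)"
      unfolding eventually_at_right_field by (intro exI[of _ "\<alpha>+1"]) auto
    have "(?y \<longlongrightarrow> y\<^sub>0) (at_right \<alpha>)"
      using right by (subst tendsto_cong[OF eventually_mono[OF ne]]) auto
    then show ?thesis using 1 assms(1) by (simp add: at_within_Icc_at_right)
  next
    case 2
    have ne: "eventually (\<lambda>t. t \<noteq> \<alpha>) (at_left \<beta>)"
      unfolding eventually_at_left_field using assms(1) by (intro exI[of _ \<alpha>]) auto
    have "(?y \<longlongrightarrow> y \<beta>) (at_left \<beta>)"
      using left by (subst tendsto_cong[OF eventually_mono[OF ne]]) auto
    then show ?thesis using 2 assms(1) by (simp add: at_within_Icc_at_left)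
  next
    case 3
    have "eventually (\<lambda>t. t \<in> - {\<alpha>}) (nhds x)"
      by (intro eventually_nhds_in_open) (use 3 in auto)
    then have ne: "eventually (\<lambda>t. t \<noteq> \<alpha>) (at x)"
      unfolding eventually_at_filter by (auto elim: eventually_mono)
    have "(?y \<longlongrightarrow> y x) (at x)"
      using inner[OF 3] by (subst tendsto_cong[OF eventually_mono[OF ne]]) (auto simp: isCont_def)
    then show ?thesis using 3 by (simp add: at_within_Icc_at)
  qed
qed

text \<open>After replacing \<open>y \<alpha>\<close> by the right limit \<open>y\<^sub>0\<close>, \<open>exp (a t) y t\<close> is continuous on \<open>[\<alpha>, s]\<close>
  with derivative \<open>exp (a t) h t\<close> inside.\<close>
lemma variation_of_constants:
  fixes y h :: "real \<Rightarrow> real"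
  assumes "\<alpha> < \<beta>"
    and deriv: "\<And>t. \<alpha> < t \<Longrightarrow> t < \<beta> \<Longrightarrow> (y has_real_derivative (-a * y t + h t)) (at t)"
    and left: "(y \<longlongrightarrow> y \<beta>) (at_left \<beta>)"
    and right: "(y \<longlongrightarrow> y\<^sub>0) (at_right \<alpha>)"
    and s: "\<alpha> < s" "s \<le> \<beta>"
  shows "((\<lambda>\<tau>. exp (-a*(s-\<tau>)) * h \<tau>) has_integral (y s - exp (-a*(s-\<alpha>)) * y\<^sub>0)) {\<alpha>..s}"
proof -
  define yc where "yc t = (if t = \<alpha> then y\<^sub>0 else y t)" for t
  have yc_cont: "continuous_on {\<alpha>..\<beta>} yc"
    unfolding yc_def using assms(1) DERIV_isCont[OF deriv] left right
    by (intro continuous_on_Icc_patch_left) auto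
  define z where "z t = exp (a*t) * yc t" for t
  have "continuous_on {\<alpha>..s} z" unfolding z_def
    by (intro continuous_intros continuous_on_subset[OF yc_cont]) (use s in auto)
  moreover have "(z has_vector_derivative exp (a*t) * h t) (at t)" if t: "t \<in> {\<alpha><..<s}" for t
  proof -
    have t': "\<alpha> < t" "t < \<beta>" using t s by auto
    have "(yc has_real_derivative (-a * y t + h t)) (at t)"
      by (rule has_field_derivative_transform_within_open[OF deriv[OF t'], of "{\<alpha><..<\<beta>}"])
         (use t' in \<open>auto simp: yc_def\<close>)
    then have "(z has_real_derivative (a * exp (a*t) * yc t + exp (a*t) * (-a * y t + h t))) (at t)"
      unfolding z_def by (auto intro!: derivative_eq_intros)
    then show ?thesis using t'
      by (simp add: yc_def has_real_derivative_iff_has_vector_derivative algebra_simps)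
  qed
  ultimately have "((\<lambda>t. exp (a*t) * h t) has_integral (z s - z \<alpha>)) {\<alpha>..s}"
    using s by (intro fundamental_theorem_of_calculus_interior) auto
  note has_integral_mult_right[OF this, of "exp (-a * s)"]
  moreover have "(\<lambda>t. exp (-a * s) * (exp (a*t) * h t)) = (\<lambda>\<tau>. exp (-a*(s-\<tau>)) * h \<tau>)"
    by (simp only: exp_mult_exp_decay)
  moreover have "exp (-a * s) * (z s - z \<alpha>) = y s - exp (-a*(s-\<alpha>)) * y\<^sub>0"
  proof -
    have "exp (-a * s) * exp (a * s) = 1" "exp (-a * s) * exp (a * \<alpha>) = exp (-a*(s-\<alpha>))"
      by (simp_all add: exp_add[symmetric] algebra_simps)
    then show ?thesis using s unfolding z_def yc_def by (simp add: algebra_simps)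
  qed
  ultimately show ?thesis by simp
qed

section \<open>Periodic time scale\<close>

locale periodic_time_scale =
  fixes \<theta> :: "int \<Rightarrow> real" and p :: nat and \<omega> :: real
  assumes theta_strict_mono: "strict_mono \<theta>"
    and theta_neg: "\<theta> (-1) < 0" and theta_pos: "0 < \<theta> 0"
    and period_pos: "p \<ge> 1"
    and theta_periodic: "\<theta> (k + 2 * int p) = \<theta> k + \<omega>"
begin

abbreviation S where "S \<equiv> sk \<theta>"

abbreviation P where "P \<equiv> psi_om \<theta> p"

abbreviation dm where "dm \<equiv> delta_max \<theta> p"

lemma theta_less_iff: "\<theta> x < \<theta> y \<longleftrightarrow> x < y"
  using theta_strict_mono by (simp add: strict_mono_less)

lemma theta_le_iff: "\<theta> x \<le> \<theta> y \<longleftrightarrow> x \<le> y"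
  using theta_strict_mono by (simp add: strict_mono_less_eq)

lemma theta_even_pos_iff: "0 < \<theta> (2*j) \<longleftrightarrow> 0 \<le> j"
proof
  assume "0 < \<theta> (2*j)"
  then have "\<not> \<theta> (2*j) < \<theta> (-1)" using theta_neg by linarith
  then show "0 \<le> j" by (simp add: theta_less_iff)
next
  assume "0 \<le> j"
  then have "\<theta> 0 \<le> \<theta> (2*j)" by (simp add: theta_le_iff)
  with theta_pos show "0 < \<theta> (2*j)" by linarith
qed

lemma theta_even_neg_iff: "\<theta> (2*j) < 0 \<longleftrightarrow> j < 0"
proof
  assume "j < 0"
  then have "\<theta> (2*j) < \<theta> (-1)" by (simp add: theta_less_iff)
  with theta_neg show "\<theta> (2*j) < 0" by linarith
qed (use theta_even_pos_iff[of j] in linarith)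

lemma del_pos: "del \<theta> k > 0"
  unfolding del_def by (simp add: theta_less_iff)

lemma eta_pos: "eta \<theta> k > 0"
  unfolding eta_def by (simp add: theta_less_iff)

lemma sk_nonneg_eq: assumes "0 \<le> k" shows "S k = \<theta> (2*k) - (\<Sum>j\<in>{0..<k}. del \<theta> j)"
proof -
  have "{j. 0 < \<theta> (2*j) \<and> \<theta> (2*j) < \<theta> (2*k)} = {0..<k}"
    by (auto simp: theta_even_pos_iff theta_less_iff)
  then show ?thesis using assms theta_even_pos_iff[of k] by (simp add: sk_def psi_def)
qed

lemma sk_neg_eq: assumes "k < 0" shows "S k = \<theta> (2*k) + (\<Sum>j\<in>{k..<0}. del \<theta> j)"
proof -
  have "{j. \<theta> (2*k) \<le> \<theta> (2*j) \<and> \<theta> (2*j) < 0} = {k..<0}"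
    by (auto simp: theta_le_iff theta_even_neg_iff)
  then show ?thesis using assms theta_even_neg_iff[of k] by (simp add: sk_def psi_def)
qed

lemma sk_succ: "S (k+1) = S k + eta \<theta> (k+1)"
proof -
  consider "0 \<le> k" | "k = -1" | "k < -1" by linarith
  then show ?thesis
  proof cases
    case 1
    then have "{0..<k+1} = insert k {0..<k}" by auto
    then show ?thesis using 1 sk_nonneg_eq[of k] sk_nonneg_eq[of "k+1"]
      by (simp add: del_def eta_def algebra_simps)
  next
    case 2
    have "{-1..<0::int} = {-1}" by auto
    then show ?thesis using 2 sk_nonneg_eq[of 0] sk_neg_eq[of "-1"] by (simp add: del_def eta_def)
  next
    case 3
    then have "{k..<0} = insert k {k+1..<0}" by auto
    then show ?thesis using 3 sk_neg_eq[of k] sk_neg_eq[of "k+1"]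
      by (simp add: del_def eta_def algebra_simps)
  qed
qed

lemma sk_pred_less: "S (k-1) < S k"
  using sk_succ[of "k-1"] eta_pos[of k] by simp

lemma sk_strict_mono: "strict_mono S"
proof
  fix j k :: int assume "j < k"
  then show "S j < S k"
  proof (induction k rule: int_gr_induct)
    case base show ?case using sk_pred_less[of "j+1"] by simp
  next
    case (step i) then show ?case using sk_pred_less[of "i+1"] by simp
  qed
qed

lemma sk_less_iff: "S j < S k \<longleftrightarrow> j < k"
  using sk_strict_mono by (simp add: strict_mono_less)

lemma sk_le_iff: "S j \<le> S k \<longleftrightarrow> j \<le> k"
  using sk_strict_mono by (simp add: strict_mono_less_eq)

lemma eta_periodic: "eta \<theta> (k + int p) = eta \<theta> k"
  using theta_periodic[of "2*k"] theta_periodic[of "2*k-1"]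
  by (simp add: eta_def algebra_simps)

lemma del_periodic: "del \<theta> (k + int p) = del \<theta> k"
  using theta_periodic[of "2*k"] theta_periodic[of "2*k+1"]
  by (simp add: del_def algebra_simps)

lemma sum_periodic_window:
  fixes g :: "int \<Rightarrow> real"
  assumes periodic: "\<And>k. g (k + int p) = g k"
  shows "(\<Sum>i<p. g (k + int i)) = (\<Sum>i<p. g (int i))"
proof -
  define W where "W k = (\<Sum>i<p. g (k + int i))" for k
  have W_succ: "W (k+1) = W k" for k
  proof -
    have "(\<Sum>i<Suc p. g (k + int i)) = g k + (\<Sum>i<p. g (k + int (Suc i)))"
      by (subst sum.lessThan_Suc_shift) simp
    then show ?thesis using periodic[of k] unfolding W_def by (simp add: algebra_simps)
  qed
  have "W k = W 0"
    by (induction k rule: int_induct[where k=0]) (use W_succ[of "_ - 1"] W_succ in auto)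
  then show ?thesis unfolding W_def by simp
qed

lemma sk_add: "S (k + int n) = S k + (\<Sum>i<n. eta \<theta> (k + 1 + int i))"
proof (induction n)
  case (Suc n)
  have "S (k + int (Suc n)) = S (k + int n) + eta \<theta> (k + int n + 1)"
    using sk_succ[of "k + int n"] by (simp add: algebra_simps)
  then show ?case using Suc by (simp add: algebra_simps)
qed simp

lemma psi_om_eq_sum: "P = (\<Sum>i<p. eta \<theta> (1 + int i))"
proof -
  have "{1..int p} = (\<lambda>i. 1 + int i) ` {..<p}"
  proof
    show "{1..int p} \<subseteq> (\<lambda>i. 1 + int i) ` {..<p}"
    proof
      fix x :: int assume "x \<in> {1..int p}"
      then have "x = 1 + int (nat (x - 1))" "nat (x - 1) < p" by auto
      then show "x \<in> (\<lambda>i. 1 + int i) ` {..<p}" by blast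
    qed
  qed auto
  moreover have "inj_on (\<lambda>i. 1 + int i) {..<p}" by (auto simp: inj_on_def)
  ultimately show ?thesis unfolding psi_om_def by (simp add: sum.reindex)
qed

lemma sk_periodic: "S (k + int p) = S k + P"
  using sk_add[of k p] psi_om_eq_sum
    sum_periodic_window[where g="eta \<theta>", OF eta_periodic, of "k+1"]
    sum_periodic_window[where g="eta \<theta>", OF eta_periodic, of 1]
  by (simp add: algebra_simps)

lemma psi_om_pos: "P > 0"
  using sk_periodic[of 0] period_pos sk_less_iff[of 0 "int p"] by simp

lemma sk_periodic_mult: "S (k + int p * int n) = S k + real n * P"
proof (induction n)
  case (Suc n)
  have "S (k + int p * int (Suc n)) = S ((k + int p * int n) + int p)" by (simp add: algebra_simps)
  also have "\<dots> = S (k + int p * int n) + P" by (rule sk_periodic)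
  finally show ?case using Suc by (simp add: algebra_simps)
qed simp

lemma sk_gap: "S k - S (k - int i) \<ge> real (i div p) * P"
proof -
  have "int p * int (i div p) \<le> int i"
    by (metis of_nat_le_iff of_nat_mult times_div_less_eq_dividend)
  then have "S (k - int i) \<le> S (k - int p * int (i div p))" by (simp add: sk_le_iff)
  moreover have "S k = S (k - int p * int (i div p)) + real (i div p) * P"
    using sk_periodic_mult[of "k - int p * int (i div p)" "i div p"] by simp
  ultimately show ?thesis by linarith
qed

lemma sk_unbounded_above: "\<exists>k. t \<le> S k"
proof -
  obtain n :: nat where "real n > (t - S 0) / P" using reals_Archimedean2 by blast
  then have "real n * P > t - S 0" using psi_om_pos by (simp add: field_simps)
  then show ?thesis using sk_periodic_mult[of 0 n] by (intro exI[of _ "int p * int n"]) simp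
qed

lemma sk_unbounded_below: "\<exists>k. S k < t"
proof -
  obtain n :: nat where "real n > (S 0 - t) / P" using reals_Archimedean2 by blast
  then have "real n * P > S 0 - t" using psi_om_pos by (simp add: field_simps)
  then show ?thesis using sk_periodic_mult[of "- int p * int n" n] by (intro exI[of _ "- int p * int n"]) simp
qed

lemma sidx_eqI: assumes "S (k-1) < t" "t \<le> S k" shows "sidx \<theta> t = k"
proof -
  have "j = k" if "S (j-1) < t" "t \<le> S j" for j
    using that assms sk_le_iff[of j "k-1"] sk_le_iff[of k "j-1"] by linarith
  then show ?thesis unfolding sidx_def using assms by (intro the_equality) blast+
qed

lemma sidx_exists: "\<exists>k. S (k-1) < t \<and> t \<le> S k"
proof -
  obtain j where j: "S j < t" using sk_unbounded_below by blast
  obtain k where k: "t \<le> S k" using sk_unbounded_above by blast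
  define n where "n = (LEAST n. t \<le> S (j + int n))"
  have "j < k" using j k sk_less_iff[of j k] by linarith
  then have "t \<le> S (j + int (nat (k - j)))" using k by simp
  then have n: "t \<le> S (j + int n)" unfolding n_def by (rule LeastI)
  then obtain l where l: "n = Suc l" using j by (cases n) auto
  have "\<not> t \<le> S (j + int l)"
    using Least_le[of "\<lambda>n. t \<le> S (j + int n)" l] l unfolding n_def by auto
  then show ?thesis using n l by (intro exI[of _ "j + int n"]) (simp add: algebra_simps)
qed

lemma sidx_bounds: "S (sidx \<theta> t - 1) < t" "t \<le> S (sidx \<theta> t)"
  using sidx_exists[of t] sidx_eqI by auto

lemma sidx_sk: "sidx \<theta> (S k) = k"
  by (rule sidx_eqI) (auto simp: sk_pred_less)

lemma sidx_mono: assumes "t \<le> t'" shows "sidx \<theta> t \<le> sidx \<theta> t'"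
  using sidx_bounds[of t] sidx_bounds[of t'] assms sk_le_iff[of "sidx \<theta> t'" "sidx \<theta> t - 1"]
  by linarith

lemma del_le_delta_max: "del \<theta> k \<le> dm"
proof -
  define k' where "k' = 1 + (k - 1) mod int p"
  have "0 \<le> (k - 1) mod int p" "(k - 1) mod int p < int p" using period_pos by auto
  then have "k' \<in> {1..int p}" unfolding k'_def by auto
  have del_shift: "del \<theta> (j + int p * z) = del \<theta> j" for j z
  proof (induction z rule: int_induct[where k=0])
    case (step1 i) then show ?case using del_periodic[of "j + int p * i"] by (simp add: algebra_simps)
  next
    case (step2 i) then show ?case using del_periodic[of "j + int p * (i - 1)"] by (simp add: algebra_simps)
  qed simp
  have "k = k' + int p * ((k - 1) div int p)" unfolding k'_def
    by (metis add.commute add.left_commute diff_add_cancel mod_mult_div_eq mult.commute)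
  then have "del \<theta> k = del \<theta> k'" using del_shift by metis
  then show ?thesis unfolding delta_max_def using \<open>k' \<in> _\<close> by (auto intro: Max_ge)
qed

lemma delta_max_pos: "dm > 0"
  using del_le_delta_max[of 0] del_pos[of 0] by linarith

lemma u_same_interval: "sidx \<theta> s = sidx \<theta> \<tau> \<Longrightarrow> u \<theta> a s \<tau> = exp (-a*(s-\<tau>))"
  unfolding u_def by simp

lemma u_cocycle:
  assumes "\<tau> \<le> \<sigma>" "\<sigma> \<le> s"
  shows "u \<theta> a s \<tau> = u \<theta> a s \<sigma> * u \<theta> a \<sigma> \<tau>"
proof -
  define A where "A = sidx \<theta> \<tau>"
  define B where "B = sidx \<theta> \<sigma>"
  define C where "C = sidx \<theta> s"
  have "A \<le> B" "B \<le> C" unfolding A_def B_def C_def using assms sidx_mono by auto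
  then have "{A..C-1} = {A..B-1} \<union> {B..C-1}" by auto
  then have prod: "(\<Prod>\<nu>\<in>{A..C-1}. 1 - del \<theta> \<nu> * a) =
      (\<Prod>\<nu>\<in>{A..B-1}. 1 - del \<theta> \<nu> * a) * (\<Prod>\<nu>\<in>{B..C-1}. 1 - del \<theta> \<nu> * a)"
    by (simp add: prod.union_disjoint ivl_disj_int)
  have exp: "exp (- a * (s - \<tau>)) = exp (- a * (s - \<sigma>)) * exp (- a * (\<sigma> - \<tau>))"
    by (simp add: exp_add[symmetric] algebra_simps)
  show ?thesis unfolding u_def A_def[symmetric] B_def[symmetric] C_def[symmetric] prod exp
    by (simp add: algebra_simps)
qed

lemma u_from_sk_pred:
  assumes "S (k-1) < s" "s \<le> S k"
  shows "u \<theta> a s (S (k-1)) = exp (-a*(s - S (k-1))) * (1 - del \<theta> (k-1) * a)"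
proof -
  have "{k-1..k-1} = {k-1}" by auto
  then show ?thesis unfolding u_def sidx_sk sidx_eqI[OF assms] by simp
qed

text \<open>The integrated form, on each \<open>(s\<^sub>k\<^sub>-\<^sub>1, s\<^sub>k]\<close>, of \<open>y' = -a y + h\<close> with the jump
  \<open>y(s\<^sub>k+) = y(s\<^sub>k) + \<delta>\<^sub>k (-a y(s\<^sub>k) + h(s\<^sub>k))\<close>; note \<open>s\<^sub>k\<^sub>-\<^sub>1\<close> carries the index \<open>k-1\<close> of \<open>\<delta>\<close>.\<close>
definition voc_form :: "real \<Rightarrow> (real \<Rightarrow> real) \<Rightarrow> (real \<Rightarrow> real) \<Rightarrow> bool" where
  "voc_form a h y \<longleftrightarrow> (\<forall>k. \<forall>s\<in>{S (k-1)<..S k}.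
     ((\<lambda>\<tau>. exp (-a*(s-\<tau>)) * h \<tau>) has_integral
       (y s - exp (-a*(s - S (k-1))) * (y (S (k-1)) + del \<theta> (k-1) * (-a * y (S (k-1)) + h (S (k-1))))))
     {S (k-1)..s})"

lemma voc_form_diff:
  assumes "voc_form a h\<^sub>1 y\<^sub>1" "voc_form a h\<^sub>2 y\<^sub>2"
  shows "voc_form a (\<lambda>t. h\<^sub>1 t - h\<^sub>2 t) (\<lambda>t. y\<^sub>1 t - y\<^sub>2 t)"
  unfolding voc_form_def
proof (intro allI ballI)
  fix k s assume s: "s \<in> {S (k-1)<..S k}"
  have "((\<lambda>\<tau>. exp (-a*(s-\<tau>)) * h\<^sub>i \<tau>) has_integral
       (y\<^sub>i s - exp (-a*(s - S (k-1))) * (y\<^sub>i (S (k-1)) + del \<theta> (k-1) * (-a * y\<^sub>i (S (k-1)) + h\<^sub>i (S (k-1))))))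
     {S (k-1)..s}" if "voc_form a h\<^sub>i y\<^sub>i" for h\<^sub>i y\<^sub>i
    using that s unfolding voc_form_def by blast
  from has_integral_diff[OF this[OF assms(1)] this[OF assms(2)]]
  show "((\<lambda>\<tau>. exp (-a*(s-\<tau>)) * (h\<^sub>1 \<tau> - h\<^sub>2 \<tau>)) has_integral
     (y\<^sub>1 s - y\<^sub>2 s - exp (-a*(s - S (k-1))) * (y\<^sub>1 (S (k-1)) - y\<^sub>2 (S (k-1))
       + del \<theta> (k-1) * (-a * (y\<^sub>1 (S (k-1)) - y\<^sub>2 (S (k-1))) + (h\<^sub>1 (S (k-1)) - h\<^sub>2 (S (k-1)))))))
     {S (k-1)..s}"
    by (simp add: algebra_simps)
qed

lemma voc_form_of_ode:
  assumes "\<And>k t. S (k-1) < t \<Longrightarrow> t < S k \<Longrightarrow> (y has_real_derivative (-a * y t + h t)) (at t)"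
    and "\<And>k. (y \<longlongrightarrow> y (S k)) (at_left (S k))"
    and "\<And>k. (y \<longlongrightarrow> y (S k) + del \<theta> k * (-a * y (S k) + h (S k))) (at_right (S k))"
  shows "voc_form a h y"
  unfolding voc_form_def
  using variation_of_constants[OF sk_pred_less assms] by auto

definition piecewise_continuous :: "(real \<Rightarrow> real) \<Rightarrow> bool" where
  "piecewise_continuous g \<longleftrightarrow>
     (\<forall>k. \<exists>\<psi>. continuous_on {S (k-1)..S k} \<psi> \<and> (\<forall>t\<in>{S (k-1)<..S k}. \<psi> t = g t))"

lemma piecewise_continuous_integrable:
  fixes c :: real
  assumes "piecewise_continuous h" "S (k-1) \<le> t" "t \<le> S k"
  shows "(\<lambda>\<tau>. exp (c * \<tau>) * h \<tau>) integrable_on {S (k-1)..t}"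
proof -
  obtain \<psi> where \<psi>: "continuous_on {S (k-1)..S k} \<psi>" "\<And>t. t\<in>{S (k-1)<..S k} \<Longrightarrow> \<psi> t = h t"
    using assms(1) unfolding piecewise_continuous_def by blast
  have "continuous_on {S (k-1)..t} (\<lambda>\<tau>. exp (c * \<tau>) * \<psi> \<tau>)"
    by (intro continuous_intros continuous_on_subset[OF \<psi>(1)]) (use assms in auto)
  then have "(\<lambda>\<tau>. exp (c * \<tau>) * \<psi> \<tau>) integrable_on {S (k-1)..t}"
    by (rule integrable_continuous_real)
  then show ?thesis
    by (rule integrable_spike_finite[of "{S (k-1)}", rotated 2]) (use \<psi>(2) assms in auto)
qed

lemma piecewise_continuous_integral_deriv:
  assumes "piecewise_continuous h" "S (k-1) < t" "t < S k"
  shows "((\<lambda>t. integral {S (k-1)..t} (\<lambda>\<tau>. exp (a * \<tau>) * h \<tau>)) has_real_derivative exp (a * t) * h t) (at t)"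
proof -
  obtain \<psi> where \<psi>: "continuous_on {S (k-1)..S k} \<psi>" "\<And>t. t\<in>{S (k-1)<..S k} \<Longrightarrow> \<psi> t = h t"
    using assms(1) unfolding piecewise_continuous_def by blast
  have cont: "continuous_on {S (k-1)..S k} (\<lambda>\<tau>. exp (a * \<tau>) * \<psi> \<tau>)"
    by (intro continuous_intros \<psi>(1))
  have "((\<lambda>t. integral {S (k-1)..t} (\<lambda>\<tau>. exp (a * \<tau>) * \<psi> \<tau>)) has_vector_derivative exp (a * t) * \<psi> t)
      (at t within {S (k-1)<..<S k})"
    by (rule has_vector_derivative_within_subset[OF integral_has_vector_derivative[OF cont]])
       (use assms in auto)
  moreover have "at t within {S (k-1)<..<S k} = at t" by (rule at_within_open) (use assms in auto)
  ultimately have deriv: "((\<lambda>t. integral {S (k-1)..t} (\<lambda>\<tau>. exp (a * \<tau>) * \<psi> \<tau>)) has_real_derivative exp (a * t) * h t) (at t)"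
    using assms \<psi>(2)[of t] by (simp add: has_real_derivative_iff_has_vector_derivative)
  have "integral {S (k-1)..x} (\<lambda>\<tau>. exp (a * \<tau>) * \<psi> \<tau>) = integral {S (k-1)..x} (\<lambda>\<tau>. exp (a * \<tau>) * h \<tau>)"
    if x: "x \<in> {S (k-1)<..<S k}" for x
    by (rule integral_spike[of "{S (k-1)}"]) (use \<psi>(2) x in auto)
  then show ?thesis
    by (intro has_field_derivative_transform_within_open[OF deriv, of "{S (k-1)<..<S k}"]) (use assms in auto)
qed

lemma piecewise_continuous_series_lim:
  assumes pc: "\<And>N. piecewise_continuous (g N)"
    and steps: "\<And>N t. \<bar>g (Suc N) t - g N t\<bar> \<le> M * q ^ N" and q: "0 \<le> q" "q < 1"
  shows "piecewise_continuous (\<lambda>t. series_lim (\<lambda>N. g N t))"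
  unfolding piecewise_continuous_def
proof
  fix k
  define I where "I = {S (k-1)..S k}"
  have "\<exists>\<psi>. continuous_on I \<psi> \<and> (\<forall>t\<in>{S (k-1)<..S k}. \<psi> t = g N t)" for N
    using pc[of N] unfolding piecewise_continuous_def I_def by blast
  then obtain \<psi> where \<psi>_cont: "\<And>N. continuous_on I (\<psi> N)"
    and \<psi>_eq: "\<And>N t. t \<in> {S (k-1)<..S k} \<Longrightarrow> \<psi> N t = g N t"
    by metis
  have "\<bar>\<psi> (Suc N) t - \<psi> N t\<bar> \<le> M * q ^ N" if "t \<in> I" for N t
  proof (cases "t = S (k-1)")
    case True
    have "(\<lambda>t. \<bar>\<psi> (Suc N) t - \<psi> N t\<bar>) (S (k-1)) \<le> (\<lambda>t. M * q ^ N) (S (k-1))"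
      by (rule le_at_left_endpoint_by_continuity[OF sk_pred_less])
         (use \<psi>_cont \<psi>_eq steps in \<open>auto simp: I_def intro!: continuous_intros\<close>)
    then show ?thesis using True by simp
  qed (use that \<psi>_eq steps in \<open>auto simp: I_def\<close>)
  then have "continuous_on I (\<lambda>t. series_lim (\<lambda>N. \<psi> N t))"
    by (intro uniform_limit_theorem[OF _ uniform_limit_series_lim[OF _ q]]) (use \<psi>_cont in auto)
  moreover have "series_lim (\<lambda>N. \<psi> N t) = series_lim (\<lambda>N. g N t)" if "t \<in> {S (k-1)<..S k}" for t
    using \<psi>_eq[OF that] by simp
  ultimately show "\<exists>\<psi>. continuous_on {S (k-1)..S k} \<psi>
      \<and> (\<forall>t\<in>{S (k-1)<..S k}. \<psi> t = series_lim (\<lambda>N. g N t))"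
    unfolding I_def by blast
qed

end

section \<open>Scalar linear impulsive equation\<close>

locale exp_stable_impulsive = periodic_time_scale +
  fixes a K :: real
  assumes a_pos: "a > 0" and K_pos: "K > 0" and lam_pos: "lam \<theta> p a > 0"
    and u_bound: "\<And>s \<tau>. \<tau> \<le> s \<Longrightarrow> \<bar>u \<theta> a s \<tau>\<bar> \<le> K * exp (- lam \<theta> p a * (s - \<tau>))"
begin

abbreviation L where "L \<equiv> lam \<theta> p a"

abbreviation \<rho> where "\<rho> \<equiv> exp (- L * P)"

lemma rho_pos: "0 < \<rho>" and rho_less_1: "\<rho> < 1"
  using lam_pos psi_om_pos by auto

lemma exp_decay_periods:
  assumes "S k \<le> s"
  shows "exp (-L*(s - S (k - int i))) \<le> \<rho> ^ (i div p)"
proof -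
  have "real (i div p) * P \<le> s - S (k - int i)" using sk_gap[of i k] assms by linarith
  then have "L * (real (i div p) * P) \<le> L * (s - S (k - int i))"
    using lam_pos by (intro mult_left_mono) auto
  then have "-L*(s - S (k - int i)) \<le> real (i div p) * (-L*P)"
    by (simp add: algebra_simps)
  then show ?thesis by (simp add: exp_of_nat_mult[symmetric])
qed

text \<open>The bound holds up to the closed left end \<open>\<tau> = s\<^sub>j\<^sub>-\<^sub>1\<close> by continuity in \<open>\<tau>\<close>, although
  there \<open>u\<close> itself jumps.\<close>
lemma u_exp_bound:
  assumes "S (j-1) \<le> \<tau>" "\<tau> \<le> t" "t \<le> S j" "t \<le> s"
  shows "\<bar>u \<theta> a s t * exp (-a*(t-\<tau>))\<bar> \<le> K * exp (-L*(s-\<tau>))"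
proof -
  have inner: "\<bar>u \<theta> a s t * exp (-a*(t-\<sigma>))\<bar> \<le> K * exp (-L*(s-\<sigma>))" if "S (j-1) < \<sigma>" "\<sigma> \<le> t" for \<sigma>
  proof -
    have "sidx \<theta> \<sigma> = j" "sidx \<theta> t = j" using that assms by (auto intro: sidx_eqI)
    then have "u \<theta> a t \<sigma> = exp (-a*(t-\<sigma>))" by (intro u_same_interval) simp
    moreover have "u \<theta> a s \<sigma> = u \<theta> a s t * u \<theta> a t \<sigma>" using that assms by (intro u_cocycle) auto
    ultimately show ?thesis using u_bound[of \<sigma> s] that assms by simp
  qed
  consider "S (j-1) < \<tau>" | "\<tau> = t" | "\<tau> = S (j-1)" "S (j-1) < t" using assms by linarith
  then show ?thesis
  proof cases
    case 2 then show ?thesis using u_bound[of t s] assms by simp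
  next
    case 3
    show ?thesis unfolding 3(1)
    proof (rule le_at_left_endpoint_by_continuity[OF 3(2), where
          f="\<lambda>\<sigma>. \<bar>u \<theta> a s t * exp (-a*(t-\<sigma>))\<bar>" and g="\<lambda>\<sigma>. K * exp (-L*(s-\<sigma>))"])
      fix \<sigma> assume "S (j-1) < \<sigma>" "\<sigma> \<le> t"
      then show "\<bar>u \<theta> a s t * exp (-a*(t-\<sigma>))\<bar> \<le> K * exp (-L*(s-\<sigma>))" by (rule inner)
    qed (auto intro!: continuous_intros)
  qed (rule inner; use assms in auto)
qed

text \<open>The two transports of \<open>y\<close> to \<open>s\<close> differ by the jump term of \<open>h\<close> at \<open>s\<^sub>j\<^sub>-\<^sub>1\<close> and the
  integral of \<open>h\<close> over \<open>[s\<^sub>j\<^sub>-\<^sub>1, t]\<close>, each weighted by a factor bounded via \<open>u_exp_bound\<close>.\<close>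
lemma voc_interval_estimate:
  assumes voc: "voc_form a h y" and h_bound: "\<And>t. \<bar>h t\<bar> \<le> B"
    and t: "S (j-1) < t" "t \<le> S j" "t \<le> s"
  shows "\<bar>u \<theta> a s t * y t - u \<theta> a s (S (j-1)) * y (S (j-1))\<bar>
    \<le> K*B*dm * exp (-L*(s - S (j-1))) + K*B * (exp (-L*(s-t)) - exp (-L*(s - S (j-1)))) / L"
proof -
  define E where "E = exp (-a*(t - S (j-1)))"
  define y\<^sub>0 where "y\<^sub>0 = y (S (j-1))"
  define \<delta> where "\<delta> = del \<theta> (j-1)"
  define U where "U = u \<theta> a s t"
  have "B \<ge> 0" using h_bound[of 0] by linarith
  have voc_t: "((\<lambda>\<tau>. exp (-a*(t-\<tau>)) * h \<tau>) has_integral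
      (y t - E * (y\<^sub>0 + \<delta> * (-a * y\<^sub>0 + h (S (j-1)))))) {S (j-1)..t}"
    using voc t unfolding voc_form_def E_def y\<^sub>0_def \<delta>_def U_def by auto
  have u_pred: "u \<theta> a s (S (j-1)) = U * (E * (1 - \<delta> * a))"
    using u_cocycle[of "S (j-1)" t s a] u_from_sk_pred[of j t a] t unfolding E_def y\<^sub>0_def \<delta>_def U_def by simp
  have split: "U * y t - u \<theta> a s (S (j-1)) * y\<^sub>0
      = U * E * \<delta> * h (S (j-1)) + U * (y t - E * (y\<^sub>0 + \<delta> * (-a * y\<^sub>0 + h (S (j-1)))))"
    unfolding u_pred by (simp add: algebra_simps)
  have UE: "\<bar>U * E\<bar> \<le> K * exp (-L*(s - S (j-1)))"
    using u_exp_bound[of j "S (j-1)" t s] t unfolding E_def y\<^sub>0_def \<delta>_def U_def by simp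
  have "\<bar>\<delta>\<bar> \<le> dm"
    using del_pos[of "j-1"] del_le_delta_max[of "j-1"] unfolding \<delta>_def by simp
  from abs_mult_le_mult[OF abs_mult_le_mult[OF UE this] h_bound]
  have "\<bar>U * E * \<delta> * h (S (j-1))\<bar> \<le> K * exp (-L*(s - S (j-1))) * dm * B" .
  then have jump: "\<bar>U * E * \<delta> * h (S (j-1))\<bar> \<le> K*B*dm * exp (-L*(s - S (j-1)))"
    by (simp add: algebra_simps)
  have flow: "\<bar>U * (y t - E * (y\<^sub>0 + \<delta> * (-a * y\<^sub>0 + h (S (j-1)))))\<bar>
      \<le> K*B * ((exp (-L*(s-t)) - exp (-L*(s - S (j-1)))) / L)"
  proof (rule has_integral_abs_le[OF has_integral_mult_right[OF voc_t]
        has_integral_mult_right[OF has_integral_exp_decay[OF lam_pos]]])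
    fix \<tau> assume "\<tau> \<in> {S (j-1)..t}"
    then have "\<bar>U * exp (-a*(t-\<tau>))\<bar> \<le> K * exp (-L*(s-\<tau>))"
      using u_exp_bound[of j \<tau> t s] t unfolding E_def y\<^sub>0_def \<delta>_def U_def by auto
    from abs_mult_le_mult[OF this h_bound]
    have "\<bar>U * exp (-a*(t-\<tau>)) * h \<tau>\<bar> \<le> K * exp (-L*(s-\<tau>)) * B" .
    then show "\<bar>U * (exp (-a*(t-\<tau>)) * h \<tau>)\<bar> \<le> K*B * exp (-L*(s-\<tau>))"
      by (simp add: algebra_simps)
  qed (use t in auto)
  have "\<bar>U * y t - u \<theta> a s (S (j-1)) * y\<^sub>0\<bar>
    \<le> K*B*dm * exp (-L*(s - S (j-1))) + K*B * (exp (-L*(s-t)) - exp (-L*(s - S (j-1)))) / L"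
    unfolding split using jump flow abs_triangle_ineq[of "U * E * \<delta> * h (S (j-1))"] by simp
  then show ?thesis unfolding U_def y\<^sub>0_def .
qed

lemma voc_backward_estimate:
  assumes voc: "voc_form a h y" and h_bound: "\<And>t. \<bar>h t\<bar> \<le> B"
    and s: "S (k-1) < s" "s \<le> S k"
  shows "\<bar>y s - u \<theta> a s (S (k-1-int n)) * y (S (k-1-int n))\<bar>
    \<le> K*B*dm * (\<Sum>i\<le>n. exp (-L*(s - S (k-1-int i)))) + K*B * (1 - exp (-L*(s - S (k-1-int n)))) / L"
proof (induction n)
  case 0
  have "u \<theta> a s s = 1" by (simp add: u_same_interval)
  then show ?case using voc_interval_estimate[OF voc h_bound s order_refl] by simp
next
  case (Suc n)
  define j where "j = k - 1 - int n"
  have "S j \<le> S (k-1)" unfolding j_def by (simp add: sk_le_iff)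
  then have step: "\<bar>u \<theta> a s (S j) * y (S j) - u \<theta> a s (S (j-1)) * y (S (j-1))\<bar>
    \<le> K*B*dm * exp (-L*(s - S (j-1))) + K*B * (exp (-L*(s - S j)) - exp (-L*(s - S (j-1)))) / L"
    using s by (intro voc_interval_estimate[OF voc h_bound sk_pred_less]) auto
  have "k - 1 - int (Suc n) = j - 1" unfolding j_def by simp
  then show ?case
    using Suc.IH step abs_triangle_ineq[of "y s - u \<theta> a s (S j) * y (S j)"]
    unfolding j_def by (simp add: add_divide_distrib diff_divide_distrib algebra_simps)
qed

definition coef_bound :: real where
  "coef_bound = K / L + real p * dm * K / (1 - \<rho>)"

text \<open>Run the backward estimate over \<open>p m\<close> intervals, where \<open>|u|\<close> has decayed by \<open>\<rho>\<^sup>m\<close>, and let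
  \<open>m \<rightarrow> \<infinity>\<close>.\<close>
lemma voc_form_bound:
  assumes voc: "voc_form a h y" and h_bound: "\<And>t. \<bar>h t\<bar> \<le> B" and y_bound: "\<And>t. \<bar>y t\<bar> \<le> D"
  shows "\<bar>y s\<bar> \<le> coef_bound * B"
proof (rule le_by_geometric_bound[OF less_imp_le[OF rho_pos] rho_less_1])
  fix m
  define k where "k = sidx \<theta> s"
  define n where "n = p * m"
  define j where "j = k - 1 - int n"
  have s: "S (k-1) < s" "s \<le> S k" unfolding k_def using sidx_bounds by auto
  have "B \<ge> 0" using h_bound[of 0] by linarith
  have "n div p = m" unfolding n_def using period_pos by simp
  then have "exp (-L*(s - S j)) \<le> \<rho> ^ m"
    using exp_decay_periods[of "k-1" s n] s unfolding j_def by simp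
  moreover have "S j \<le> s" using s sk_le_iff[of j "k-1"] unfolding j_def by simp
  ultimately have "\<bar>u \<theta> a s (S j)\<bar> \<le> K * \<rho> ^ m"
    using u_bound[of "S j" s] K_pos by (meson mult_left_mono order.trans less_imp_le)
  from abs_mult_le_mult[OF this y_bound]
  have "\<bar>u \<theta> a s (S j) * y (S j)\<bar> \<le> K * \<rho> ^ m * D" .
  then have transported: "\<bar>u \<theta> a s (S j) * y (S j)\<bar> \<le> K * D * \<rho> ^ m"
    by (simp add: algebra_simps)
  have "(\<Sum>i\<le>n. exp (-L*(s - S (k-1-int i)))) \<le> (\<Sum>i\<le>n. \<rho> ^ (i div p))"
    using exp_decay_periods s by (intro sum_mono) auto
  also have "\<dots> \<le> real p / (1 - \<rho>)" using sum_power_div_le rho_pos rho_less_1 period_pos by auto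
  finally have "K*B*dm * (\<Sum>i\<le>n. exp (-L*(s - S (k-1-int i)))) \<le> K*B*dm * (real p / (1 - \<rho>))"
    using K_pos \<open>B \<ge> 0\<close> delta_max_pos by (intro mult_left_mono) auto
  moreover have "K*B * (1 - exp (-L*(s - S j))) / L \<le> K*B / L"
    using K_pos \<open>B \<ge> 0\<close> lam_pos by (intro divide_right_mono) (auto intro!: mult_left_le)
  ultimately show "\<bar>y s\<bar> \<le> coef_bound * B + K * D * \<rho> ^ m"
    using voc_backward_estimate[OF voc h_bound s, of n] transported abs_triangle_ineq4[of "y s"]
    unfolding coef_bound_def j_def by (simp add: algebra_simps)
qed

lemma scaled_integral_bound:
  assumes "piecewise_continuous h" "\<And>t. \<bar>h t\<bar> \<le> B" "S (k-1) \<le> t" "t \<le> S k"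
  shows "\<bar>exp (-a * t) * integral {S (k-1)..t} (\<lambda>\<tau>. exp (a * \<tau>) * h \<tau>)\<bar> \<le> B / a"
proof -
  have "B \<ge> 0" using assms(2)[of 0] by linarith
  have "\<bar>integral {S (k-1)..t} (\<lambda>\<tau>. exp (a * \<tau>) * h \<tau>)\<bar> \<le> B * ((exp (a * t) - exp (a * S (k-1))) / a)"
    by (rule integral_exp_growth_bound[OF a_pos assms(3)
          piecewise_continuous_integrable[OF assms(1,3,4)] assms(2)])
  then have "\<bar>exp (-a * t) * integral {S (k-1)..t} (\<lambda>\<tau>. exp (a * \<tau>) * h \<tau>)\<bar>
      \<le> exp (-a * t) * (B * ((exp (a * t) - exp (a * S (k-1))) / a))"
    unfolding abs_mult abs_exp_cancel by (intro mult_left_mono) auto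
  also have "\<dots> = B * ((1 - exp (-a * t) * exp (a * S (k-1))) / a)"
    by (simp add: field_simps exp_minus)
  also have "\<dots> \<le> B * (1 / a)"
    using \<open>B \<ge> 0\<close> a_pos by (intro mult_left_mono divide_right_mono) auto
  finally show ?thesis by simp
qed

text \<open>The value at \<open>s\<^sub>k\<close> of the solution started from \<open>0\<close> just before the jump at \<open>s\<^sub>k\<^sub>-\<^sub>1\<close>.\<close>
definition interval_forcing :: "(real \<Rightarrow> real) \<Rightarrow> int \<Rightarrow> real" where
  "interval_forcing h k = exp (-a*(S k - S (k-1))) * del \<theta> (k-1) * h (S (k-1))
      + exp (-a * S k) * integral {S (k-1)..S k} (\<lambda>\<tau>. exp (a * \<tau>) * h \<tau>)"

definition green_value :: "(real \<Rightarrow> real) \<Rightarrow> int \<Rightarrow> real" where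
  "green_value h k = (\<Sum>i. u \<theta> a (S k) (S (k - int i)) * interval_forcing h (k - int i))"

definition green_piece :: "(real \<Rightarrow> real) \<Rightarrow> int \<Rightarrow> real \<Rightarrow> real" where
  "green_piece h k t =
     exp (-a*(t - S (k-1))) * (green_value h (k-1) + del \<theta> (k-1) * (-a * green_value h (k-1) + h (S (k-1))))
      + exp (-a * t) * integral {S (k-1)..t} (\<lambda>\<tau>. exp (a * \<tau>) * h \<tau>)"

definition green_sol :: "(real \<Rightarrow> real) \<Rightarrow> real \<Rightarrow> real" where
  "green_sol h t = green_piece h (sidx \<theta> t) t"

lemma interval_forcing_bound:
  assumes "piecewise_continuous h" "\<And>t. \<bar>h t\<bar> \<le> B"
  shows "\<bar>interval_forcing h k\<bar> \<le> dm * B + B / a"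
proof -
  have "exp (-a*(S k - S (k-1))) \<le> 1" using a_pos sk_pred_less[of k] by simp
  then have "\<bar>exp (-a*(S k - S (k-1))) * del \<theta> (k-1)\<bar> \<le> 1 * dm"
    using del_pos[of "k-1"] del_le_delta_max[of "k-1"] by (intro abs_mult_le_mult) auto
  from abs_mult_le_mult[OF this assms(2)]
  have "\<bar>exp (-a*(S k - S (k-1))) * del \<theta> (k-1) * h (S (k-1))\<bar> \<le> dm * B" by simp
  moreover have "\<bar>exp (-a * S k) * integral {S (k-1)..S k} (\<lambda>\<tau>. exp (a * \<tau>) * h \<tau>)\<bar> \<le> B / a"
    using scaled_integral_bound[OF assms, of k "S k"] sk_pred_less[of k] by simp
  ultimately show ?thesis
    using abs_triangle_ineq[of "exp (-a*(S k - S (k-1))) * del \<theta> (k-1) * h (S (k-1))"]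
    unfolding interval_forcing_def by linarith
qed

lemma green_term_bound:
  assumes "piecewise_continuous h" "\<And>t. \<bar>h t\<bar> \<le> B"
  shows "\<bar>u \<theta> a (S k) (S (k - int i)) * interval_forcing h (k - int i)\<bar>
    \<le> K * (dm * B + B / a) * \<rho> ^ (i div p)"
proof -
  have "\<bar>u \<theta> a (S k) (S (k - int i))\<bar> \<le> K * exp (-L*(S k - S (k-int i)))"
    by (rule u_bound) (simp add: sk_le_iff)
  also have "\<dots> \<le> K * \<rho> ^ (i div p)" using exp_decay_periods[of k "S k" i] K_pos by simp
  finally have "\<bar>u \<theta> a (S k) (S (k - int i))\<bar> \<le> K * \<rho> ^ (i div p)" .
  from abs_mult_le_mult[OF this interval_forcing_bound[OF assms]] show ?thesis
    by (simp add: algebra_simps)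
qed

lemma green_sum_summable:
  assumes "piecewise_continuous h" "\<And>t. \<bar>h t\<bar> \<le> B"
  shows "summable (\<lambda>i. u \<theta> a (S k) (S (k - int i)) * interval_forcing h (k - int i))"
  using suminf_abs_le(1)[OF summable_mult[OF summable_power_div(1)] green_term_bound[OF assms]]
    rho_pos rho_less_1 period_pos by simp

lemma green_value_bound:
  assumes "piecewise_continuous h" "\<And>t. \<bar>h t\<bar> \<le> B"
  shows "\<bar>green_value h k\<bar> \<le> K * (dm * B + B / a) * (real p / (1 - \<rho>))"
proof -
  have "B \<ge> 0" using assms(2)[of 0] by linarith
  have "\<bar>green_value h k\<bar> \<le> (\<Sum>i. K * (dm * B + B / a) * \<rho> ^ (i div p))"
    unfolding green_value_def using rho_pos rho_less_1 period_pos
    by (intro suminf_abs_le(2)[OF summable_mult[OF summable_power_div(1)] green_term_bound[OF assms]]) auto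
  also have "\<dots> = K * (dm * B + B / a) * (\<Sum>i. \<rho> ^ (i div p))"
    using rho_pos rho_less_1 period_pos by (intro suminf_mult summable_power_div(1)) auto
  also have "\<dots> \<le> K * (dm * B + B / a) * (real p / (1 - \<rho>))"
    using K_pos \<open>B \<ge> 0\<close> delta_max_pos a_pos summable_power_div(2)[of \<rho> p] rho_pos rho_less_1 period_pos
    by (intro mult_left_mono) auto
  finally show ?thesis .
qed

lemma green_value_rec:
  assumes "piecewise_continuous h" "\<And>t. \<bar>h t\<bar> \<le> B"
  shows "green_value h k = u \<theta> a (S k) (S (k-1)) * green_value h (k-1) + interval_forcing h k"
proof -
  let ?f = "\<lambda>i. u \<theta> a (S k) (S (k - int i)) * interval_forcing h (k - int i)"
  have "?f (Suc i) = u \<theta> a (S k) (S (k-1))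
      * (u \<theta> a (S (k-1)) (S (k - 1 - int i)) * interval_forcing h (k - 1 - int i))" for i
    using u_cocycle[of "S (k - 1 - int i)" "S (k-1)" "S k" a] by (simp add: sk_le_iff algebra_simps)
  then have "(\<Sum>i. ?f (Suc i)) = u \<theta> a (S k) (S (k-1)) * green_value h (k-1)"
    unfolding green_value_def using suminf_mult[OF green_sum_summable[OF assms, of "k-1"]] by simp
  moreover have "?f 0 = interval_forcing h k" by (simp add: u_same_interval)
  ultimately show ?thesis
    using suminf_split_head[OF green_sum_summable[OF assms, of k]] unfolding green_value_def by simp
qed

lemma green_sol_eq_piece: "S (k-1) < t \<Longrightarrow> t \<le> S k \<Longrightarrow> green_sol h t = green_piece h k t"
  unfolding green_sol_def using sidx_eqI by simp

lemma green_sol_sk: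
  assumes "piecewise_continuous h" "\<And>t. \<bar>h t\<bar> \<le> B"
  shows "green_sol h (S k) = green_value h k"
proof -
  have "green_sol h (S k) = green_piece h k (S k)"
    by (rule green_sol_eq_piece[OF sk_pred_less order_refl])
  also have "\<dots> = u \<theta> a (S k) (S (k-1)) * green_value h (k-1) + interval_forcing h k"
    unfolding green_piece_def interval_forcing_def u_from_sk_pred[OF sk_pred_less order_refl]
    by (simp add: algebra_simps)
  also have "\<dots> = green_value h k" by (rule green_value_rec[symmetric, OF assms])
  finally show ?thesis .
qed

lemma green_piece_continuous:
  assumes "piecewise_continuous h"
  shows "continuous_on {S (k-1)..S k} (green_piece h k)"
proof -
  have "continuous_on {S (k-1)..S k} (\<lambda>t. integral {S (k-1)..t} (\<lambda>\<tau>. exp (a * \<tau>) * h \<tau>))"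
    by (rule indefinite_integral_continuous_1[OF piecewise_continuous_integrable[OF assms]])
       (use sk_pred_less[of k] in auto)
  then show ?thesis unfolding green_piece_def by (intro continuous_intros) auto
qed

lemma green_sol_piecewise_continuous:
  assumes "piecewise_continuous h"
  shows "piecewise_continuous (green_sol h)"
  unfolding piecewise_continuous_def
  using green_piece_continuous[OF assms] green_sol_eq_piece by fastforce

lemma green_sol_voc_form:
  assumes "piecewise_continuous h" "\<And>t. \<bar>h t\<bar> \<le> B"
  shows "voc_form a h (green_sol h)"
  unfolding voc_form_def
proof (intro allI ballI)
  fix k s assume s: "s \<in> {S (k-1)<..S k}"
  have "(\<lambda>\<tau>. exp (a * \<tau>) * h \<tau>) integrable_on {S (k-1)..s}"
    by (rule piecewise_continuous_integrable[OF assms(1)]) (use s in auto)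
  from has_integral_mult_right[OF integrable_integral[OF this], of "exp (-a * s)"]
  have "((\<lambda>\<tau>. exp (-a*(s-\<tau>)) * h \<tau>) has_integral
      exp (-a * s) * integral {S (k-1)..s} (\<lambda>\<tau>. exp (a * \<tau>) * h \<tau>)) {S (k-1)..s}"
    by (simp only: exp_mult_exp_decay)
  then show "((\<lambda>\<tau>. exp (-a*(s-\<tau>)) * h \<tau>) has_integral
       (green_sol h s - exp (-a*(s - S (k-1))) * (green_sol h (S (k-1))
         + del \<theta> (k-1) * (-a * green_sol h (S (k-1)) + h (S (k-1)))))) {S (k-1)..s}"
    using s green_sol_eq_piece[of k s h] green_sol_sk[OF assms, of "k-1"]
    unfolding green_piece_def by simp
qed

lemma green_sol_deriv:
  assumes "piecewise_continuous h" "S (k-1) < t" "t < S k"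
  shows "(green_sol h has_real_derivative (-a * green_sol h t + h t)) (at t)"
proof -
  define y\<^sub>0 where "y\<^sub>0 = green_value h (k-1) + del \<theta> (k-1) * (-a * green_value h (k-1) + h (S (k-1)))"
  define I where "I t = integral {S (k-1)..t} (\<lambda>\<tau>. exp (a * \<tau>) * h \<tau>)" for t
  have piece: "green_piece h k = (\<lambda>x. exp (-a*(x - S (k-1))) * y\<^sub>0 + exp (-a * x) * I x)"
    unfolding green_piece_def y\<^sub>0_def I_def ..
  have "(I has_real_derivative exp (a * t) * h t) (at t)"
    unfolding I_def by (rule piecewise_continuous_integral_deriv[OF assms])
  then have "(green_piece h k has_real_derivative
      (exp (-a*(t - S (k-1))) * (-a) * y\<^sub>0 + (exp (-a * t) * (-a) * I t + exp (-a * t) * (exp (a * t) * h t)))) (at t)"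
    unfolding piece by (auto intro!: derivative_eq_intros)
  moreover have "exp (a * t) * exp (- (a * t)) = 1"
    by (simp add: exp_add[symmetric])
  ultimately have deriv: "(green_piece h k has_real_derivative (-a * green_piece h k t + h t)) (at t)"
    by (simp add: piece algebra_simps)
  have "green_piece h k t = green_sol h t" using assms green_sol_eq_piece by simp
  from deriv[unfolded this] show ?thesis
  proof (rule has_field_derivative_transform_within_open)
    show "open {S (k-1)<..<S k}" "t \<in> {S (k-1)<..<S k}" using assms by auto
  qed (simp add: green_sol_eq_piece[symmetric])
qed

lemma green_sol_left_limit:
  assumes "piecewise_continuous h"
  shows "(green_sol h \<longlongrightarrow> green_sol h (S k)) (at_left (S k))"
proof -
  have "(green_piece h k \<longlongrightarrow> green_piece h k (S k)) (at (S k) within {S (k-1)..S k})"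
    using green_piece_continuous[OF assms, of k] sk_pred_less[of k] by (auto simp: continuous_on_def)
  then have "(green_piece h k \<longlongrightarrow> green_piece h k (S k)) (at_left (S k))"
    using sk_pred_less[of k] by (simp add: at_within_Icc_at_left)
  moreover have "eventually (\<lambda>t. green_piece h k t = green_sol h t) (at_left (S k))"
    unfolding eventually_at_left_field using sk_pred_less[of k] green_sol_eq_piece
    by (intro exI[of _ "S (k-1)"]) auto
  ultimately show ?thesis
    using green_sol_eq_piece[OF sk_pred_less order_refl] tendsto_cong by fastforce
qed

lemma green_sol_right_limit:
  assumes "piecewise_continuous h" "\<And>t. \<bar>h t\<bar> \<le> B"
  shows "(green_sol h \<longlongrightarrow> green_sol h (S k) + del \<theta> k * (-a * green_sol h (S k) + h (S k))) (at_right (S k))"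
proof -
  have next_interval: "S k < S (k+1)" using sk_pred_less[of "k+1"] by simp
  have "(green_piece h (k+1) \<longlongrightarrow> green_piece h (k+1) (S k)) (at (S k) within {S k..S (k+1)})"
    using green_piece_continuous[OF assms(1), of "k+1"] next_interval by (auto simp: continuous_on_def)
  then have "(green_piece h (k+1) \<longlongrightarrow> green_piece h (k+1) (S k)) (at_right (S k))"
    using next_interval by (simp add: at_within_Icc_at_right)
  moreover have "eventually (\<lambda>t. green_piece h (k+1) t = green_sol h t) (at_right (S k))"
    unfolding eventually_at_right_field using next_interval green_sol_eq_piece[of "k+1"]
    by (intro exI[of _ "S (k+1)"]) auto
  moreover have "green_piece h (k+1) (S k) = green_sol h (S k) + del \<theta> k * (-a * green_sol h (S k) + h (S k))"
    unfolding green_piece_def green_sol_sk[OF assms] by simp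
  ultimately show ?thesis using tendsto_cong by fastforce
qed

lemma green_sol_bounded:
  assumes "piecewise_continuous h" "\<And>t. \<bar>h t\<bar> \<le> B"
  shows "\<exists>D. \<forall>t. \<bar>green_sol h t\<bar> \<le> D"
proof -
  define G where "G = K * (dm * B + B / a) * (real p / (1 - \<rho>))"
  have "\<bar>green_sol h t\<bar> \<le> (G + dm * (a * G + B)) + B / a" for t
  proof -
    define k where "k = sidx \<theta> t"
    define g where "g = green_value h (k-1)"
    define y\<^sub>0 where "y\<^sub>0 = g + del \<theta> (k-1) * (-a * g + h (S (k-1)))"
    have t: "S (k-1) < t" "t \<le> S k" unfolding k_def using sidx_bounds by auto
    have g: "\<bar>g\<bar> \<le> G" unfolding g_def G_def by (rule green_value_bound[OF assms])
    then have "\<bar>-a * g\<bar> \<le> a * G"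
      using a_pos by (simp add: abs_mult mult_left_mono)
    then have "\<bar>-a * g + h (S (k-1))\<bar> \<le> a * G + B"
      using assms(2)[of "S (k-1)"] abs_triangle_ineq[of "-a * g"] by linarith
    then have "\<bar>del \<theta> (k-1) * (-a * g + h (S (k-1)))\<bar> \<le> dm * (a * G + B)"
      using del_pos[of "k-1"] del_le_delta_max[of "k-1"] by (intro abs_mult_le_mult) auto
    then have "\<bar>y\<^sub>0\<bar> \<le> G + dm * (a * G + B)"
      using g abs_triangle_ineq[of g] unfolding y\<^sub>0_def by linarith
    then have "\<bar>exp (-a*(t - S (k-1))) * y\<^sub>0\<bar> \<le> 1 * (G + dm * (a * G + B))"
      using a_pos t by (intro abs_mult_le_mult) auto
    moreover have "\<bar>exp (-a * t) * integral {S (k-1)..t} (\<lambda>\<tau>. exp (a * \<tau>) * h \<tau>)\<bar> \<le> B / a"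
      using scaled_integral_bound[OF assms, of k t] t by simp
    moreover have "green_sol h t
        = exp (-a*(t - S (k-1))) * y\<^sub>0 + exp (-a * t) * integral {S (k-1)..t} (\<lambda>\<tau>. exp (a * \<tau>) * h \<tau>)"
      using green_sol_eq_piece[OF t] unfolding green_piece_def y\<^sub>0_def g_def by simp
    ultimately show ?thesis
      using abs_triangle_ineq[of "exp (-a*(t - S (k-1))) * y\<^sub>0"] by simp
  qed
  then show ?thesis by blast
qed

lemma green_sol_bound:
  assumes "piecewise_continuous h" "\<And>t. \<bar>h t\<bar> \<le> B"
  shows "\<bar>green_sol h t\<bar> \<le> coef_bound * B"
  using green_sol_bounded[OF assms] voc_form_bound[OF green_sol_voc_form[OF assms] assms(2)] by blast

end

section \<open>Contraction argument for the network\<close>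

locale impulsive_network = periodic_time_scale \<theta> p \<omega> for \<theta> p \<omega> +
  fixes m n r :: nat and a :: "cell \<Rightarrow> real" and C :: "cell \<Rightarrow> cell \<Rightarrow> real"
    and f :: "real \<Rightarrow> real" and K :: "cell \<Rightarrow> real" and Mf Lf :: real
    and \<Lambda> :: "vec set" and F :: "vec \<Rightarrow> vec" and \<zeta> :: "int \<Rightarrow> vec"
  assumes dims_pos: "m \<ge> 1" "n \<ge> 1"
    and a_pos: "\<forall>c\<in>cells m n. a c > 0"
    and C_nonneg: "\<forall>c\<in>cells m n. \<forall>d\<in>cells m n. C c d \<ge> 0"
    and f_continuous: "continuous_on UNIV f"
    and Lambda_compact: "compact \<Lambda>" and F_into: "F ` \<Lambda> \<subseteq> \<Lambda>"
    and lam_pos: "\<forall>c\<in>cells m n. lam \<theta> p (a c) > 0"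
    and Mf_pos: "Mf > 0" and f_bounded: "\<forall>x. \<bar>f x\<bar> \<le> Mf"
    and Lf_pos: "Lf > 0" and f_lipschitz: "\<forall>x y. \<bar>f x - f y\<bar> \<le> Lf * \<bar>x - y\<bar>"
    and K_pos: "\<forall>c\<in>cells m n. K c > 0"
    and u_bound: "\<forall>c\<in>cells m n. \<forall>s \<tau>. \<tau> \<le> s \<longrightarrow>
            \<bar>u \<theta> (a c) s \<tau>\<bar> \<le> K c * exp (- lam \<theta> p (a c) * (s - \<tau>))"
    and Mf_c_bar_less_1: "Mf * cbar m n r \<theta> p a C K < 1"
    and contraction: "(Mf + H0 m n r \<theta> p a C K Mf \<Lambda> F * Lf) * cbar m n r \<theta> p a C K < 1"
    and zeta_orbit: "\<zeta> \<in> Theta \<Lambda> F"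
begin

abbreviation Cells where "Cells \<equiv> cells m n"

abbreviation H where "H \<equiv> H0 m n r \<theta> p a C K Mf \<Lambda> F"

abbreviation c_bar where "c_bar \<equiv> cbar m n r \<theta> p a C K"

abbreviation q where "q \<equiv> (Mf + H * Lf) * c_bar"

abbreviation M_F where "M_F \<equiv> MF m n \<Lambda> F"

abbreviation \<kappa> where "\<kappa> c \<equiv> coef \<theta> p a K c"

abbreviation \<kappa>_max where "\<kappa>_max \<equiv> Max (coef \<theta> p a K ` Cells)"

abbreviation row_sum where "row_sum c \<equiv> (\<Sum>d\<in>nbhd m n r c. C c d)"

lemma cells_finite: "finite Cells"
  unfolding cells_def by simp

lemma cells_nonempty: "Cells \<noteq> {}"
  using dims_pos unfolding cells_def by auto

lemma nbhd_in_cells: "d \<in> nbhd m n r c \<Longrightarrow> d \<in> Cells"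
  unfolding nbhd_def by auto

lemma exp_stable_cell: "c \<in> Cells \<Longrightarrow> exp_stable_impulsive \<theta> p \<omega> (a c) (K c)"
  unfolding exp_stable_impulsive_def exp_stable_impulsive_axioms_def
  using periodic_time_scale_axioms a_pos lam_pos K_pos u_bound by auto

lemma coef_bound_eq: "c \<in> Cells \<Longrightarrow> exp_stable_impulsive.coef_bound \<theta> p (a c) (K c) = \<kappa> c"
  by (simp add: exp_stable_impulsive.coef_bound_def[OF exp_stable_cell] coef_def)

lemma coef_nonneg: assumes "c \<in> Cells" shows "0 \<le> \<kappa> c"
proof -
  interpret exp_stable_impulsive \<theta> p \<omega> "a c" "K c" by (rule exp_stable_cell[OF assms])
  show ?thesis
    unfolding coef_def using K_pos lam_pos delta_max_pos rho_less_1 by (simp add: add_nonneg_nonneg)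
qed

lemma row_sum_nonneg: "c \<in> Cells \<Longrightarrow> 0 \<le> row_sum c"
  using C_nonneg nbhd_in_cells by (meson sum_nonneg)

lemma coef_le_max: "c \<in> Cells \<Longrightarrow> \<kappa> c \<le> \<kappa>_max"
  using cells_finite by (intro Max_ge) auto

lemma coef_row_sum_le_c_bar: "c \<in> Cells \<Longrightarrow> \<kappa> c * row_sum c \<le> c_bar"
  unfolding cbar_def using cells_finite by (intro Max_ge) auto

lemma coef_max_nonneg: "0 \<le> \<kappa>_max"
  using cells_nonempty coef_le_max coef_nonneg by (meson all_not_in_conv order_trans)

lemma c_bar_nonneg: "0 \<le> c_bar"
  using cells_nonempty coef_row_sum_le_c_bar coef_nonneg row_sum_nonneg
  by (meson all_not_in_conv mult_nonneg_nonneg order_trans)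

lemma zeta_in_Lambda: "\<zeta> k \<in> \<Lambda>" and zeta_succ: "\<zeta> (k+1) = F (\<zeta> k)"
  using zeta_orbit unfolding Theta_def by auto

lemma Lambda_bounded: "\<exists>B. \<forall>c\<in>Cells. \<forall>v\<in>\<Lambda>. \<bar>v c\<bar> \<le> B"
proof -
  have "\<exists>B. \<forall>v\<in>\<Lambda>. \<bar>v c\<bar> \<le> B" for c
  proof -
    have "compact ((\<lambda>v. v c) ` \<Lambda>)"
      by (rule compact_continuous_image[OF continuous_on_subset[OF continuous_on_product_coordinates]
            Lambda_compact]) auto
    then have "bounded ((\<lambda>v. v c) ` \<Lambda>)" by (rule compact_imp_bounded)
    then show ?thesis unfolding bounded_real by auto
  qed
  then obtain B where "\<And>c v. v \<in> \<Lambda> \<Longrightarrow> \<bar>v c\<bar> \<le> B c" by metis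
  then show ?thesis
    using cells_finite by (intro exI[of _ "Max (B ` Cells)"]) (force intro: order_trans[OF _ Max_ge])
qed

lemma vnorm_ge: "c \<in> Cells \<Longrightarrow> \<bar>v c\<bar> \<le> vnorm m n v"
  unfolding vnorm_def using cells_finite by (intro Max_ge) auto

lemma zeta_bound: "c \<in> Cells \<Longrightarrow> \<bar>\<zeta> k c\<bar> \<le> M_F"
proof -
  assume c: "c \<in> Cells"
  obtain B where B: "\<forall>c\<in>Cells. \<forall>v\<in>\<Lambda>. \<bar>v c\<bar> \<le> B" using Lambda_bounded by blast
  have "vnorm m n (F \<eta>) \<le> B" if "\<eta> \<in> \<Lambda>" for \<eta>
    unfolding vnorm_def using B F_into that cells_finite cells_nonempty by (subst Max_le_iff) auto
  then have "bdd_above ((\<lambda>\<eta>. vnorm m n (F \<eta>)) ` \<Lambda>)" by (intro bdd_aboveI2)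
  moreover have "\<zeta> k = F (\<zeta> (k-1))" using zeta_succ[of "k-1"] by simp
  ultimately have "vnorm m n (\<zeta> k) \<le> M_F"
    unfolding MF_def using zeta_in_Lambda[of "k-1"] by (auto intro!: cSup_upper)
  then show ?thesis using vnorm_ge[OF c, of "\<zeta> k"] by linarith
qed

lemma M_F_nonneg: "0 \<le> M_F"
  using cells_nonempty zeta_bound[of _ 0] by (meson abs_ge_zero all_not_in_conv order_trans)

lemma H_nonneg: "0 \<le> H"
  unfolding H0_def using M_F_nonneg Mf_c_bar_less_1 coef_max_nonneg by simp

text \<open>\<open>H\<close> is the fixed point of the a-priori bound \<open>H \<mapsto> M\<^sub>f c_bar H + \<kappa>_max M\<^sub>F\<close>.\<close>
lemma H_eq: "Mf * c_bar * H + \<kappa>_max * M_F = H"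
  using Mf_c_bar_less_1 unfolding H0_def by (simp add: field_simps)

lemma q_nonneg: "0 \<le> q"
  using Mf_pos H_nonneg Lf_pos c_bar_nonneg by simp

definition frozen_forcing :: "(real \<Rightarrow> vec) \<Rightarrow> cell \<Rightarrow> real \<Rightarrow> real" where
  "frozen_forcing \<phi> c \<tau> = - (\<Sum>d\<in>nbhd m n r c. C c d * f (\<phi> \<tau> d)) * \<phi> \<tau> c + \<zeta> (sidx \<theta> \<tau>) c"

definition picard_op :: "(real \<Rightarrow> vec) \<Rightarrow> real \<Rightarrow> vec" where
  "picard_op \<phi> = (\<lambda>t c. exp_stable_impulsive.green_sol \<theta> (a c) (frozen_forcing \<phi> c) t)"

definition admissible :: "(real \<Rightarrow> vec) \<Rightarrow> bool" where
  "admissible \<phi> \<longleftrightarrow> (\<forall>c\<in>Cells. piecewise_continuous (\<lambda>t. \<phi> t c)) \<and> (\<forall>t. \<forall>c\<in>Cells. \<bar>\<phi> t c\<bar> \<le> H)"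

lemma frozen_forcing_piecewise_continuous:
  assumes "\<forall>d\<in>Cells. piecewise_continuous (\<lambda>t. \<phi> t d)" "c \<in> Cells"
  shows "piecewise_continuous (frozen_forcing \<phi> c)"
  unfolding piecewise_continuous_def
proof
  fix k
  have "\<forall>d\<in>Cells. \<exists>\<psi>. continuous_on {S (k-1)..S k} \<psi> \<and> (\<forall>t\<in>{S (k-1)<..S k}. \<psi> t = \<phi> t d)"
    using assms(1) unfolding piecewise_continuous_def by blast
  then obtain \<Psi> where \<Psi>_cont: "\<And>d. d \<in> Cells \<Longrightarrow> continuous_on {S (k-1)..S k} (\<Psi> d)"
      and \<Psi>_eq: "\<And>d t. d \<in> Cells \<Longrightarrow> t \<in> {S (k-1)<..S k} \<Longrightarrow> \<Psi> d t = \<phi> t d"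
    by metis
  define g where "g \<tau> = - (\<Sum>d\<in>nbhd m n r c. C c d * f (\<Psi> d \<tau>)) * \<Psi> c \<tau> + \<zeta> k c" for \<tau>
  have "continuous_on {S (k-1)..S k} g" unfolding g_def
    using \<Psi>_cont[OF assms(2)] \<Psi>_cont[OF nbhd_in_cells]
    by (intro continuous_intros continuous_on_compose2[OF f_continuous]) auto
  moreover have "g t = frozen_forcing \<phi> c t" if "t \<in> {S (k-1)<..S k}" for t
    using that sidx_eqI[of k t] \<Psi>_eq[OF assms(2) that] \<Psi>_eq[OF nbhd_in_cells that]
    unfolding g_def frozen_forcing_def by simp
  ultimately show "\<exists>\<psi>. continuous_on {S (k-1)..S k} \<psi> \<and> (\<forall>t\<in>{S (k-1)<..S k}. \<psi> t = frozen_forcing \<phi> c t)"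
    by blast
qed

lemma frozen_forcing_bound:
  assumes "\<forall>t. \<forall>d\<in>Cells. \<bar>\<phi> t d\<bar> \<le> H" "c \<in> Cells"
  shows "\<bar>frozen_forcing \<phi> c \<tau>\<bar> \<le> Mf * row_sum c * H + M_F"
proof -
  have "\<bar>\<Sum>d\<in>nbhd m n r c. C c d * f (\<phi> \<tau> d)\<bar> \<le> (\<Sum>d\<in>nbhd m n r c. C c d * Mf)"
    using C_nonneg assms(2) f_bounded nbhd_in_cells
    by (intro order_trans[OF sum_abs sum_mono]) (simp add: abs_mult mult_left_mono)
  also have "\<dots> = Mf * row_sum c" by (simp add: sum_distrib_left mult.commute)
  finally have "\<bar>(\<Sum>d\<in>nbhd m n r c. C c d * f (\<phi> \<tau> d)) * \<phi> \<tau> c\<bar> \<le> Mf * row_sum c * H"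
    using assms by (intro abs_mult_le_mult) auto
  then show ?thesis
    unfolding frozen_forcing_def using zeta_bound[OF assms(2), of "sidx \<theta> \<tau>"] by linarith
qed

lemma frozen_forcing_lipschitz:
  assumes "\<forall>t. \<forall>d\<in>Cells. \<bar>\<phi> t d\<bar> \<le> H" "\<forall>t. \<forall>d\<in>Cells. \<bar>\<phi>' t d - \<phi> t d\<bar> \<le> W" "c \<in> Cells"
  shows "\<bar>frozen_forcing \<phi>' c \<tau> - frozen_forcing \<phi> c \<tau>\<bar> \<le> (Mf + H * Lf) * row_sum c * W"
proof -
  have "frozen_forcing \<phi>' c \<tau> - frozen_forcing \<phi> c \<tau>
      = (\<Sum>d\<in>nbhd m n r c. C c d * (f (\<phi> \<tau> d) * \<phi> \<tau> c - f (\<phi>' \<tau> d) * \<phi>' \<tau> c))"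
    unfolding frozen_forcing_def by (simp add: sum_distrib_right sum_subtractf mult.assoc right_diff_distrib)
  also have "\<bar>\<dots>\<bar> \<le> (\<Sum>d\<in>nbhd m n r c. C c d * ((Mf + H * Lf) * W))"
  proof (rule order_trans[OF sum_abs sum_mono])
    fix d assume "d \<in> nbhd m n r c"
    then have "d \<in> Cells" by (rule nbhd_in_cells)
    have "\<bar>f (\<phi>' \<tau> d) * \<phi>' \<tau> c - f (\<phi> \<tau> d) * \<phi> \<tau> c\<bar> \<le> (Mf + H * Lf) * W"
      using assms \<open>d \<in> Cells\<close> f_bounded f_lipschitz Lf_pos
      by (intro bounded_lipschitz_mult_diff) auto
    then show "\<bar>C c d * (f (\<phi> \<tau> d) * \<phi> \<tau> c - f (\<phi>' \<tau> d) * \<phi>' \<tau> c)\<bar> \<le> C c d * ((Mf + H * Lf) * W)"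
      using C_nonneg assms(3) \<open>d \<in> Cells\<close> by (simp add: abs_mult abs_minus_commute mult_left_mono)
  qed
  also have "\<dots> = (Mf + H * Lf) * row_sum c * W"
    unfolding sum_distrib_right[symmetric] by (simp add: mult_ac)
  finally show ?thesis .
qed

lemma voc_contraction:
  assumes c: "c \<in> Cells" and "voc_form (a c) h\<^sub>1 y\<^sub>1" "voc_form (a c) h\<^sub>2 y\<^sub>2"
    and "\<And>t. \<bar>h\<^sub>1 t - h\<^sub>2 t\<bar> \<le> (Mf + H * Lf) * row_sum c * W"
    and "\<And>t. \<bar>y\<^sub>1 t - y\<^sub>2 t\<bar> \<le> D" and "0 \<le> W"
  shows "\<bar>y\<^sub>1 t - y\<^sub>2 t\<bar> \<le> q * W"
proof -
  have "\<bar>y\<^sub>1 t - y\<^sub>2 t\<bar> \<le> \<kappa> c * ((Mf + H * Lf) * row_sum c * W)"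
    using exp_stable_impulsive.voc_form_bound[OF exp_stable_cell[OF c] voc_form_diff[OF assms(2,3)] assms(4,5)]
      coef_bound_eq[OF c] by simp
  also have "\<dots> = (Mf + H * Lf) * (\<kappa> c * row_sum c) * W" by (simp add: algebra_simps)
  also have "\<dots> \<le> q * W"
    using coef_row_sum_le_c_bar[OF c] Mf_pos H_nonneg Lf_pos \<open>0 \<le> W\<close>
    by (intro mult_right_mono mult_left_mono) auto
  finally show ?thesis .
qed

lemma admissible_forcing:
  assumes "admissible \<phi>" "c \<in> Cells"
  shows "piecewise_continuous (frozen_forcing \<phi> c)"
    and "\<And>\<tau>. \<bar>frozen_forcing \<phi> c \<tau>\<bar> \<le> Mf * row_sum c * H + M_F"
  using assms frozen_forcing_piecewise_continuous frozen_forcing_bound unfolding admissible_def by auto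

lemma picard_op_admissible:
  assumes "admissible \<phi>"
  shows "admissible (picard_op \<phi>)"
proof -
  have "\<bar>picard_op \<phi> t c\<bar> \<le> H" if c: "c \<in> Cells" for c t
  proof -
    have "\<bar>picard_op \<phi> t c\<bar> \<le> \<kappa> c * (Mf * row_sum c * H + M_F)"
      unfolding picard_op_def
      using exp_stable_impulsive.green_sol_bound[OF exp_stable_cell[OF c] admissible_forcing[OF assms c]]
        coef_bound_eq[OF c] by simp
    also have "\<dots> = Mf * H * (\<kappa> c * row_sum c) + \<kappa> c * M_F" by (simp add: algebra_simps)
    also have "\<dots> \<le> Mf * H * c_bar + \<kappa>_max * M_F"
      using coef_row_sum_le_c_bar[OF c] coef_le_max[OF c] Mf_pos H_nonneg M_F_nonneg
      by (intro add_mono mult_left_mono mult_right_mono) auto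
    also have "\<dots> = H" using H_eq by (simp add: algebra_simps)
    finally show ?thesis .
  qed
  moreover have "piecewise_continuous (\<lambda>t. picard_op \<phi> t c)" if c: "c \<in> Cells" for c
    unfolding picard_op_def
    using exp_stable_impulsive.green_sol_piecewise_continuous[OF exp_stable_cell[OF c]
        admissible_forcing(1)[OF assms c]] by simp
  ultimately show ?thesis unfolding admissible_def by auto
qed

lemma picard_op_voc_form:
  assumes "admissible \<phi>" "c \<in> Cells"
  shows "voc_form (a c) (frozen_forcing \<phi> c) (\<lambda>t. picard_op \<phi> t c)"
  unfolding picard_op_def
  using exp_stable_impulsive.green_sol_voc_form[OF exp_stable_cell[OF assms(2)] admissible_forcing[OF assms]]
  by simp

lemma picard_op_contraction:
  assumes "admissible \<phi>" "admissible \<phi>'" "\<forall>t. \<forall>c\<in>Cells. \<bar>\<phi>' t c - \<phi> t c\<bar> \<le> W" "c \<in> Cells"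
  shows "\<bar>picard_op \<phi>' t c - picard_op \<phi> t c\<bar> \<le> q * W"
proof (rule voc_contraction[OF assms(4) picard_op_voc_form[OF assms(2,4)] picard_op_voc_form[OF assms(1,4)]])
  show "\<bar>frozen_forcing \<phi>' c \<tau> - frozen_forcing \<phi> c \<tau>\<bar> \<le> (Mf + H * Lf) * row_sum c * W" for \<tau>
    using assms(1) by (intro frozen_forcing_lipschitz[OF _ assms(3,4)]) (simp add: admissible_def)
  show "\<bar>picard_op \<phi>' t c - picard_op \<phi> t c\<bar> \<le> 2 * H" for t
  proof -
    have "\<bar>picard_op \<phi>' t c\<bar> \<le> H" "\<bar>picard_op \<phi> t c\<bar> \<le> H"
      using picard_op_admissible[OF assms(1)] picard_op_admissible[OF assms(2)] assms(4)
      unfolding admissible_def by auto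
    then show ?thesis using abs_triangle_ineq4[of "picard_op \<phi>' t c"] by linarith
  qed
  show "0 \<le> W" using assms(3,4) by (meson abs_ge_zero order_trans)
qed

definition picard_iter :: "nat \<Rightarrow> real \<Rightarrow> vec" where
  "picard_iter N = (picard_op ^^ N) (\<lambda>t c. 0)"

lemma picard_iter_Suc: "picard_iter (Suc N) = picard_op (picard_iter N)"
  unfolding picard_iter_def by simp

lemma picard_iter_admissible: "admissible (picard_iter N)"
proof (induction N)
  case 0
  have "piecewise_continuous (\<lambda>t. 0)"
    unfolding piecewise_continuous_def by (auto intro!: exI[of _ "\<lambda>t. 0"])
  then show ?case unfolding admissible_def picard_iter_def using H_nonneg by simp
qed (simp add: picard_iter_Suc picard_op_admissible)

lemma picard_iter_step: "c \<in> Cells \<Longrightarrow> \<bar>picard_iter (Suc N) t c - picard_iter N t c\<bar> \<le> H * q ^ N"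
proof (induction N arbitrary: t c)
  case 0
  then show ?case using picard_iter_admissible[of 1] by (simp add: admissible_def picard_iter_def)
next
  case (Suc N)
  have "\<bar>picard_op (picard_iter (Suc N)) t c - picard_op (picard_iter N) t c\<bar> \<le> q * (H * q ^ N)"
    by (rule picard_op_contraction[OF picard_iter_admissible picard_iter_admissible _ Suc.prems])
       (use Suc.IH in auto)
  then show ?case by (simp add: picard_iter_Suc[of "Suc N"] picard_iter_Suc[of N] algebra_simps)
qed

definition picard_lim :: "real \<Rightarrow> vec" where
  "picard_lim t c = series_lim (\<lambda>N. picard_iter N t c)"

lemma picard_iter_lim_dist: "c \<in> Cells \<Longrightarrow> \<bar>picard_iter N t c - picard_lim t c\<bar> \<le> H * q ^ N / (1 - q)"
  unfolding picard_lim_def by (rule series_lim_dist) (use picard_iter_step q_nonneg contraction in auto)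

lemma picard_lim_admissible: "admissible picard_lim"
  unfolding admissible_def
proof (intro conjI ballI allI)
  fix c t assume c: "c \<in> Cells"
  show "piecewise_continuous (\<lambda>t. picard_lim t c)"
    unfolding picard_lim_def
    using picard_iter_admissible picard_iter_step[OF c] q_nonneg contraction c
    by (intro piecewise_continuous_series_lim) (auto simp: admissible_def)
  show "\<bar>picard_lim t c\<bar> \<le> H"
  proof (rule le_by_geometric_bound[OF q_nonneg contraction])
    fix N
    have "\<bar>picard_iter N t c\<bar> \<le> H" using picard_iter_admissible[of N] c unfolding admissible_def by auto
    then show "\<bar>picard_lim t c\<bar> \<le> H + H / (1 - q) * q ^ N"
      using picard_iter_lim_dist[OF c, of N t] by (simp add: algebra_simps)
  qed
qed

lemma picard_lim_fixed: "c \<in> Cells \<Longrightarrow> picard_op picard_lim t c = picard_lim t c"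
proof -
  assume c: "c \<in> Cells"
  have "\<bar>picard_op picard_lim t c - picard_lim t c\<bar> \<le> 0"
  proof (rule le_by_geometric_bound[OF q_nonneg contraction])
    fix N
    have "\<bar>picard_op picard_lim t c - picard_op (picard_iter N) t c\<bar> \<le> q * (H * q ^ N / (1 - q))"
      by (rule picard_op_contraction[OF picard_iter_admissible picard_lim_admissible _ c])
         (use picard_iter_lim_dist in \<open>auto simp: abs_minus_commute\<close>)
    moreover have "\<bar>picard_iter (Suc N) t c - picard_lim t c\<bar> \<le> H * q ^ Suc N / (1 - q)"
      by (rule picard_iter_lim_dist[OF c])
    ultimately have "\<bar>picard_op picard_lim t c - picard_lim t c\<bar> \<le> q * (H * q ^ N / (1 - q)) + H * q ^ Suc N / (1 - q)"
      unfolding picard_iter_Suc by linarith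
    also have "\<dots> = 0 + (2 * H * q / (1 - q)) * q ^ N" by (simp add: field_simps)
    finally show "\<bar>picard_op picard_lim t c - picard_lim t c\<bar> \<le> 0 + (2 * H * q / (1 - q)) * q ^ N" .
  qed
  then show ?thesis by simp
qed

text \<open>\<open>picard_lim\<close> is a fixed point only on the cells; applying \<open>picard_op\<close> once more gives the
  solution, whose regularity comes directly from the scalar theory.\<close>
definition solution :: "real \<Rightarrow> vec" where
  "solution = picard_op picard_lim"

lemma frozen_forcing_solution: "c \<in> Cells \<Longrightarrow> frozen_forcing solution c = frozen_forcing picard_lim c"
  unfolding frozen_forcing_def solution_def
  using picard_lim_fixed nbhd_in_cells by (auto intro!: sum.cong)

lemma rhs_eq_frozen_forcing:
  "sidx \<theta> t = k \<Longrightarrow> rhs m n r a C f (y t) (\<zeta> k) c = - a c * y t c + frozen_forcing y c t"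
  unfolding rhs_def frozen_forcing_def by (simp add: sum_distrib_right)

lemma solution_is_sol: "is_sol m n r \<theta> a C f \<zeta> solution"
  unfolding is_sol_def
proof (intro conjI allI ballI)
  fix k c assume c: "c \<in> Cells"
  interpret exp_stable_impulsive \<theta> p \<omega> "a c" "K c" by (rule exp_stable_cell[OF c])
  define h where "h = frozen_forcing solution c"
  have forcing: "piecewise_continuous h" "\<And>\<tau>. \<bar>h \<tau>\<bar> \<le> Mf * row_sum c * H + M_F"
    unfolding h_def frozen_forcing_solution[OF c] by (rule admissible_forcing[OF picard_lim_admissible c])+
  have sol: "solution t c = green_sol h t" for t
    unfolding h_def frozen_forcing_solution[OF c] by (simp add: solution_def picard_op_def)
  have rhs: "rhs m n r a C f (solution t) (\<zeta> (sidx \<theta> t)) c = - a c * green_sol h t + h t" for t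
    using rhs_eq_frozen_forcing[of t "sidx \<theta> t" solution c] unfolding h_def sol by simp
  show "((\<lambda>t. solution t c) has_real_derivative rhs m n r a C f (solution t) (\<zeta> k) c) (at t)"
    if "t \<in> {S (k-1)<..<S k}" for t
    using green_sol_deriv[OF forcing(1), of k t] that rhs[of t] sidx_eqI[of k t] unfolding sol by simp
  show "((\<lambda>t. solution t c) \<longlongrightarrow> solution (S k) c) (at_left (S k))"
    using green_sol_left_limit[OF forcing(1)] unfolding sol .
  show "((\<lambda>t. solution t c) \<longlongrightarrow> solution (S k) c + del \<theta> k * rhs m n r a C f (solution (S k)) (\<zeta> k) c)
      (at_right (S k))"
    using green_sol_right_limit[OF forcing, of k] rhs[of "S k"] unfolding sol sidx_sk by simp
qed

lemma solution_bound: "c \<in> Cells \<Longrightarrow> \<bar>solution t c\<bar> \<le> H"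
  using picard_op_admissible[OF picard_lim_admissible] unfolding solution_def admissible_def by auto

lemma solution_voc_form: "c \<in> Cells \<Longrightarrow> voc_form (a c) (frozen_forcing solution c) (\<lambda>t. solution t c)"
  using picard_op_voc_form[OF picard_lim_admissible] frozen_forcing_solution unfolding solution_def by simp

lemma is_sol_voc_form:
  assumes sol: "is_sol m n r \<theta> a C f \<zeta> y" and c: "c \<in> Cells"
  shows "voc_form (a c) (frozen_forcing y c) (\<lambda>t. y t c)"
proof (rule voc_form_of_ode)
  fix k t assume t: "S (k-1) < t" "t < S k"
  then have "((\<lambda>t. y t c) has_real_derivative rhs m n r a C f (y t) (\<zeta> k) c) (at t)"
    using sol c unfolding is_sol_def by auto
  then show "((\<lambda>t. y t c) has_real_derivative (- a c * y t c + frozen_forcing y c t)) (at t)"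
    using rhs_eq_frozen_forcing[OF sidx_eqI[OF t(1) less_imp_le[OF t(2)]]] by simp
next
  fix k
  show "((\<lambda>t. y t c) \<longlongrightarrow> y (S k) c) (at_left (S k))"
    using sol c unfolding is_sol_def by auto
  have "((\<lambda>t. y t c) \<longlongrightarrow> y (S k) c + del \<theta> k * rhs m n r a C f (y (S k)) (\<zeta> k) c) (at_right (S k))"
    using sol c unfolding is_sol_def by auto
  then show "((\<lambda>t. y t c) \<longlongrightarrow> y (S k) c + del \<theta> k * (- a c * y (S k) c + frozen_forcing y c (S k)))
      (at_right (S k))"
    unfolding rhs_eq_frozen_forcing[OF sidx_sk] .
qed

text \<open>Both \<open>y\<close> and the solution are fixed points of the contraction in the integrated form.\<close>
lemma bounded_sol_dist:
  assumes sol: "is_sol m n r \<theta> a C f \<zeta> y" and y_bound: "\<forall>t. \<forall>c\<in>Cells. \<bar>y t c\<bar> \<le> H"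
  shows "c \<in> Cells \<Longrightarrow> \<bar>y t c - solution t c\<bar> \<le> 2 * H * q ^ N"
proof (induction N arbitrary: t c)
  have initial: "\<bar>y s c - solution s c\<bar> \<le> 2 * H" if "c \<in> Cells" for s c
  proof -
    have "\<bar>y s c\<bar> \<le> H" "\<bar>solution s c\<bar> \<le> H" using y_bound solution_bound that by auto
    then show ?thesis using abs_triangle_ineq4[of "y s c" "solution s c"] by linarith
  qed
  {
    case 0
    then show ?case using initial by simp
  next
    case (Suc N)
    have "\<bar>y t c - solution t c\<bar> \<le> q * (2 * H * q ^ N)"
    proof (rule voc_contraction[OF Suc.prems is_sol_voc_form[OF sol Suc.prems] solution_voc_form[OF Suc.prems]])
      show "\<bar>frozen_forcing y c s - frozen_forcing solution c s\<bar> \<le> (Mf + H * Lf) * row_sum c * (2 * H * q ^ N)" for s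
        using frozen_forcing_lipschitz[OF _ _ Suc.prems, of solution y] solution_bound Suc.IH by simp
      show "\<bar>y s c - solution s c\<bar> \<le> 2 * H" for s
        by (rule initial[OF Suc.prems])
      show "0 \<le> 2 * H * q ^ N" using H_nonneg q_nonneg by simp
    qed
    then show ?case by (simp add: algebra_simps)
  }
qed

lemma bounded_sol_unique:
  assumes "is_sol m n r \<theta> a C f \<zeta> y" "\<forall>t. \<forall>c\<in>Cells. \<bar>y t c\<bar> \<le> H" "c \<in> Cells"
  shows "y t c = solution t c"
proof -
  have "\<bar>y t c - solution t c\<bar> \<le> 0"
  proof (rule le_by_geometric_bound[OF q_nonneg contraction])
    show "\<bar>y t c - solution t c\<bar> \<le> 0 + 2 * H * q ^ N" for N using bounded_sol_dist[OF assms] by simp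
  qed
  then show ?thesis by simp
qed

end

theorem lemma1:
  fixes m n r p :: nat and a :: "cell \<Rightarrow> real" and C :: "cell \<Rightarrow> cell \<Rightarrow> real"
    and f :: "real \<Rightarrow> real" and \<theta> :: "int \<Rightarrow> real" and \<omega> :: real
    and \<Lambda> :: "vec set" and F :: "vec \<Rightarrow> vec" and K :: "cell \<Rightarrow> real" and Mf Lf :: real
  assumes "m \<ge> 1" and "n \<ge> 1"
    and "\<forall>c\<in>cells m n. a c > 0"
    and "\<forall>c\<in>cells m n. \<forall>d\<in>cells m n. C c d \<ge> 0"
    and "continuous_on UNIV f"
    and "strict_mono \<theta>" and "\<theta> (-1) < 0" and "0 < \<theta> 0"
    and "\<omega> > 0" and "p \<ge> 1" and "\<forall>k. \<theta> (k + 2 * int p) = \<theta> k + \<omega>"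
    and "\<Lambda> \<subseteq> {v. \<forall>c. c \<notin> cells m n \<longrightarrow> v c = 0}"
    and "compact \<Lambda>" and "continuous_on \<Lambda> F" and "F ` \<Lambda> \<subseteq> \<Lambda>"
    \<comment> \<open>(C1)\<close>
    and "\<forall>c\<in>cells m n. \<forall>k. del \<theta> k * a c \<noteq> 1"
    \<comment> \<open>(C2)\<close>
    and "\<forall>c\<in>cells m n. lam \<theta> p (a c) > 0"
    \<comment> \<open>(C3)\<close>
    and "Mf > 0" and "\<forall>x. \<bar>f x\<bar> \<le> Mf"
    \<comment> \<open>(C4)\<close>
    and "Lf > 0" and "\<forall>x y. \<bar>f x - f y\<bar> \<le> Lf * \<bar>x - y\<bar>"
    \<comment> \<open>the constants K_ij\<close>
    and "\<forall>c\<in>cells m n. K c > 0"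
    and "\<forall>c\<in>cells m n. \<forall>s \<tau>. \<tau> \<le> s \<longrightarrow>
            \<bar>u \<theta> (a c) s \<tau>\<bar> \<le> K c * exp (- lam \<theta> p (a c) * (s - \<tau>))"
    \<comment> \<open>(C5), including M_f * cbar < 1\<close>
    and "Mf * cbar m n r \<theta> p a C K < 1"
    and "(Mf + H0 m n r \<theta> p a C K Mf \<Lambda> F * Lf) * cbar m n r \<theta> p a C K < 1"
    and "\<zeta> \<in> Theta \<Lambda> F"
  shows "\<exists>\<phi>. is_sol m n r \<theta> a C f \<zeta> \<phi>
            \<and> (\<forall>t. \<forall>c\<in>cells m n. \<bar>\<phi> t c\<bar> \<le> H0 m n r \<theta> p a C K Mf \<Lambda> F)
            \<and> (\<forall>y. is_sol m n r \<theta> a C f \<zeta> y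
                   \<and> (\<forall>t. \<forall>c\<in>cells m n. \<bar>y t c\<bar> \<le> H0 m n r \<theta> p a C K Mf \<Lambda> F)
                   \<longrightarrow> (\<forall>t. \<forall>c\<in>cells m n. y t c = \<phi> t c))"
proof -
  interpret impulsive_network \<theta> p \<omega> m n r a C f K Mf Lf \<Lambda> F \<zeta>
    by unfold_locales (use assms in auto)
  show ?thesis using solution_is_sol solution_bound bounded_sol_unique by blast
qed

end
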